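(* Let $s>1/2$ and $0<\epsilon<\min\{1,2s-1\}$. Then there exist $\sigma\in(0,1)$ and $C>0$ such that for all $u_1,u_2,u_3\in H^s(\mathbb{R})$, $\|T_\sigma(u_1,u_2,u_3)\|_{H^{s+\epsilon}}\le C\prod_{j=1}^3\|u_j\|_{H^s}$.
   Context: (Cubic term $-i|w|^2\partial_x\bar w$ of the gauge-transformed derivative NLS $iw_t+w_{xx}=-i|w|^2\partial_x\bar w-\frac12|w|^4w$.) $\langle a\rangle=(1+|a|^2)^{1/2}$; $\Xi=(\xi,\xi_1,\xi_2,\xi_3)$, $\Phi(\Xi)=\xi^2-\xi_1^2+\xi_2^2-\xi_3^2=2(\xi-\xi_1)(\xi-\xi_3)$, $m(\Xi)=\xi_2$, and $\mathcal{F}[T_\sigma(u_1,u_2,u_3)](\xi)=\int_{\xi_1+\xi_2+\xi_3=\xi}\langle\Phi(\Xi)\rangle^{-\sigma}m(\Xi)\hat u_1(\xi_1)\hat u_2(\xi_2)\hat u_3(\xi_3)\,d\xi_1d\xi_3$. *)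

theory Defs
  imports "HOL-Analysis.Analysis"
begin

definition japan :: "real \<Rightarrow> real" where
  "japan a = sqrt (1 + a\<^sup>2)"

definition Phi :: "real \<Rightarrow> real \<Rightarrow> real \<Rightarrow> real \<Rightarrow> real" where
  "Phi \<xi> \<xi>1 \<xi>2 \<xi>3 = \<xi>\<^sup>2 - \<xi>1\<^sup>2 + \<xi>2\<^sup>2 - \<xi>3\<^sup>2"

text \<open>The functions f1 f2 f3 play the role of the Fourier transforms of u1 u2 u3.\<close>
definition T_integrand ::
  "real \<Rightarrow> (real \<Rightarrow> complex) \<Rightarrow> (real \<Rightarrow> complex) \<Rightarrow> (real \<Rightarrow> complex)
    \<Rightarrow> real \<Rightarrow> real \<times> real \<Rightarrow> complex" where
  "T_integrand \<sigma> f1 f2 f3 \<xi> p =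
     (let \<xi>1 = fst p; \<xi>3 = snd p; \<xi>2 = \<xi> - \<xi>1 - \<xi>3 in
      complex_of_real (japan (Phi \<xi> \<xi>1 \<xi>2 \<xi>3) powr (- \<sigma>) * \<xi>2)
        * f1 \<xi>1 * f2 \<xi>2 * f3 \<xi>3)"

text \<open>Fourier transform of T_sigma(u1,u2,u3), given hat u_j = f_j.\<close>
definition T_hat ::
  "real \<Rightarrow> (real \<Rightarrow> complex) \<Rightarrow> (real \<Rightarrow> complex) \<Rightarrow> (real \<Rightarrow> complex)
    \<Rightarrow> real \<Rightarrow> complex" where
  "T_hat \<sigma> f1 f2 f3 \<xi> = (\<integral> p. T_integrand \<sigma> f1 f2 f3 \<xi> p \<partial>lborel)"

text \<open>f is the Fourier transform of an H^s function: measurable with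
  <xi>^s f in L^2.\<close>
definition in_Hs_hat :: "real \<Rightarrow> (real \<Rightarrow> complex) \<Rightarrow> bool" where
  "in_Hs_hat s f \<longleftrightarrow> f \<in> borel_measurable lborel \<and>
     integrable lborel (\<lambda>\<xi>. japan \<xi> powr (2 * s) * (cmod (f \<xi>))\<^sup>2)"

definition Hs_norm_hat :: "real \<Rightarrow> (real \<Rightarrow> complex) \<Rightarrow> real" where
  "Hs_norm_hat s f = sqrt (\<integral> \<xi>. japan \<xi> powr (2 * s) * (cmod (f \<xi>))\<^sup>2 \<partial>lborel)"

end

theory Submission
  imports Defs
begin

(* On the Fourier side the estimate is a weighted L^2 bound for a trilinear integral with kernel
     K = <xi>^(s+eps) |xi2| <Phi>^(-sigma) / (<xi1>^s <xi2>^s <xi3>^s),   Phi = 2 (xi - xi1) (xi - xi3).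
   K is symmetric in xi1, xi3, so one may assume |a| <= |b| for a = xi - xi1, b = xi - xi3.  If |xi3| is
   much larger than <b>, all four frequencies are comparable and K is bounded by a multiple of
   <Phi>^(-sigma), because 1 + eps < 2s.  Otherwise <xi> and <xi2> are controlled by <b>, and <b - a>
   by <xi1> <xi3>, which gives K <= C (1 + <b>^(1+eps) <b-a>^(-q)) <2ab>^(-sigma) for q <= min s 1.
   This majorant has singularities |a|^(-sigma) and |b - a|^(-q) of integrable order, and the choice
   2 + eps - 2 sigma - q <= 0 makes its integral over |a| <= |b| bounded uniformly in b.  Schur's test
   (Cauchy-Schwarz against the kernel) then turns these fiber bounds into the trilinear L^2 bound. *)

lemma borel_measurable_japan [measurable]: "japan \<in> borel_measurable borel"
  unfolding japan_def by measurable

lemma japan_pos: "0 < japan x"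
  unfolding japan_def by (simp add: add_pos_nonneg)

lemma japan_nonzero [simp]: "japan x \<noteq> 0"
  using japan_pos[of x] by simp

lemma japan_ge_one: "1 \<le> japan x"
  unfolding japan_def by simp

lemma abs_le_japan: "\<bar>x\<bar> \<le> japan x"
  unfolding japan_def by (rule real_le_rsqrt) simp

lemma power2_japan: "(japan x)\<^sup>2 = 1 + x\<^sup>2"
  unfolding japan_def by simp

lemma japan_uminus [simp]: "japan (- x) = japan x"
  unfolding japan_def by simp

lemma japan_powr: "japan x powr r = exp (r * ln (japan x))"
  by (simp add: powr_def)

lemma japan_powr_neg_le_one: "0 \<le> q \<Longrightarrow> japan x powr (- q) \<le> 1"
  using powr_mono[of "- q" 0 "japan x"] japan_ge_one[of x] by simp

lemma ln_japan_nonneg: "0 \<le> ln (japan x)"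
  using japan_ge_one[of x] by simp

lemma japan_le_mult_japan:
  assumes "\<bar>x\<bar> \<le> c * \<bar>y\<bar>" "1 \<le> c"
  shows "japan x \<le> c * japan y"
proof -
  have "\<bar>x\<bar>\<^sup>2 \<le> (c * \<bar>y\<bar>)\<^sup>2"
    using assms by (intro power_mono) auto
  then have "x\<^sup>2 \<le> c\<^sup>2 * y\<^sup>2"
    by (simp add: power_mult_distrib)
  moreover have "1 \<le> c\<^sup>2"
    using assms(2) by (simp add: one_le_power)
  ultimately have "1 + x\<^sup>2 \<le> c\<^sup>2 * (1 + y\<^sup>2)"
    by (simp add: algebra_simps)
  also have "\<dots> = (c * japan y)\<^sup>2"
    by (simp add: power_mult_distrib power2_japan)
  finally show ?thesis
    unfolding japan_def by (intro real_le_lsqrt) (use assms japan_pos[of y] in auto)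
qed

lemma japan_mono: "\<bar>x\<bar> \<le> \<bar>y\<bar> \<Longrightarrow> japan x \<le> japan y"
  using japan_le_mult_japan[of x 1 y] by simp

lemma japan_add_le: "japan (x + y) \<le> japan x + \<bar>y\<bar>"
proof -
  have "x * y \<le> \<bar>x\<bar> * \<bar>y\<bar>"
    by (simp add: abs_mult[symmetric])
  also have "\<dots> \<le> japan x * \<bar>y\<bar>"
    by (intro mult_right_mono abs_le_japan) auto
  finally have "x * y \<le> japan x * \<bar>y\<bar>" .
  then have "1 + (x + y)\<^sup>2 \<le> (japan x + \<bar>y\<bar>)\<^sup>2"
    by (simp add: power2_sum power2_japan)
  then show ?thesis
    unfolding japan_def by (intro real_le_lsqrt) (use japan_pos[of x] in auto)
qed

lemma japan_le_one_plus_abs: "japan x \<le> 1 + \<bar>x\<bar>"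
  using japan_add_le[of 0 x] by (simp add: japan_def)

lemma ln_le_ln_add_ln:
  fixes x y c :: real
  assumes "0 < x" "0 < y" "x \<le> c * y"
  shows "ln x \<le> ln c + ln y"
proof -
  have "0 < c * y"
    using assms by linarith
  then have "0 < c"
    using assms(2) by (simp add: zero_less_mult_iff)
  with assms have "ln x \<le> ln (c * y)"
    by simp
  also have "\<dots> = ln c + ln y"
    using \<open>0 < c\<close> assms by (simp add: ln_mult)
  finally show ?thesis .
qed

lemma ln_japan_add_le: "ln (japan (x + y)) \<le> ln 2 / 2 + ln (japan x) + ln (japan y)"
proof -
  have "(x + y)\<^sup>2 \<le> 2 * x\<^sup>2 + 2 * y\<^sup>2"
    using sum_squares_bound[of x y] by (simp add: power2_eq_square algebra_simps)
  moreover have "2 * ((1 + x\<^sup>2) * (1 + y\<^sup>2)) = 2 + 2 * x\<^sup>2 + 2 * y\<^sup>2 + 2 * (x\<^sup>2 * y\<^sup>2)"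
    by (simp add: algebra_simps)
  moreover have "0 \<le> x\<^sup>2 * y\<^sup>2"
    by simp
  ultimately have "1 + (x + y)\<^sup>2 \<le> 2 * ((1 + x\<^sup>2) * (1 + y\<^sup>2))"
    by linarith
  then have "sqrt (1 + (x + y)\<^sup>2) \<le> sqrt (2 * ((1 + x\<^sup>2) * (1 + y\<^sup>2)))"
    by (rule real_sqrt_le_mono)
  then have "japan (x + y) \<le> sqrt 2 * (japan x * japan y)"
    unfolding japan_def by (simp only: real_sqrt_mult)
  then have "ln (japan (x + y)) \<le> ln (sqrt 2) + ln (japan x * japan y)"
    by (intro ln_le_ln_add_ln japan_pos) (simp_all add: japan_pos)
  then show ?thesis
    by (simp add: ln_mult japan_pos ln_sqrt)
qed

lemma abs_ln_japan_diff_le: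
  assumes "\<bar>x - y\<bar> \<le> \<bar>y\<bar> / 2"
  shows "\<bar>ln (japan x) - ln (japan y)\<bar> \<le> ln 2"
proof -
  have "ln (japan x) \<le> ln 2 + ln (japan y)"
    using assms by (intro ln_le_ln_add_ln japan_pos japan_le_mult_japan) arith+
  moreover have "ln (japan y) \<le> ln 2 + ln (japan x)"
    using assms by (intro ln_le_ln_add_ln japan_pos japan_le_mult_japan) arith+
  ultimately show ?thesis
    by arith
qed

definition log_weight :: "real \<Rightarrow> real \<Rightarrow> real \<Rightarrow> real \<Rightarrow> real \<Rightarrow> real" where
  "log_weight s \<epsilon> \<xi> \<xi>1 \<xi>3 =
     (s + \<epsilon>) * ln (japan \<xi>) + (1 - s) * ln (japan (\<xi> - \<xi>1 - \<xi>3))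
     - s * ln (japan \<xi>1) - s * ln (japan \<xi>3)"

text \<open>In both regimes the bound is certified by writing the difference as a sum of products of
  nonnegative factors.\<close>

lemma log_weight_le_far:
  assumes eps: "0 \<le> \<epsilon>" "1 + \<epsilon> < 2 * min s 1"
    and near_diag: "\<bar>\<xi> - \<xi>1\<bar> \<le> \<bar>\<xi> - \<xi>3\<bar>" and far: "4 * japan (\<xi> - \<xi>3) \<le> \<bar>\<xi>3\<bar>"
  shows "log_weight s \<epsilon> \<xi> \<xi>1 \<xi>3 \<le> (3 * s + 2) * ln 2"
proof -
  define L where "L x = ln (japan x)" for x
  define \<xi>2 where "\<xi>2 = \<xi> - \<xi>1 - \<xi>3"
  have s: "1 + \<epsilon> < 2 * s" "\<epsilon> < 1"
    using eps(2) min.cobounded1[of s 1] min.cobounded2[of s 1] by linarith+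
  have b: "\<bar>\<xi> - \<xi>3\<bar> \<le> \<bar>\<xi>3\<bar> / 4"
    using far abs_le_japan[of "\<xi> - \<xi>3"] by linarith
  have d: "\<bar>L \<xi> - L \<xi>3\<bar> \<le> ln 2"
    unfolding L_def using b by (intro abs_ln_japan_diff_le) linarith
  have d1: "\<bar>L \<xi>1 - L \<xi>3\<bar> \<le> ln 2"
    unfolding L_def using near_diag b by (intro abs_ln_japan_diff_le) arith
  have "\<bar>\<xi>2 - - \<xi>3\<bar> \<le> \<bar>- \<xi>3\<bar> / 2"
    using near_diag b unfolding \<xi>2_def by arith
  then have d2: "\<bar>L \<xi>2 - L \<xi>3\<bar> \<le> ln 2"
    using abs_ln_japan_diff_le unfolding L_def by fastforce
  have "(3 * s + 2) * ln 2 - log_weight s \<epsilon> \<xi> \<xi>1 \<xi>3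
      = (2 * s - 1 - \<epsilon>) * L \<xi>3 + (s + \<epsilon>) * (ln 2 - (L \<xi> - L \<xi>3))
        + (ln 2 - (L \<xi>2 - L \<xi>3)) + s * (ln 2 - (L \<xi>3 - L \<xi>2))
        + s * (ln 2 - (L \<xi>3 - L \<xi>1)) + (1 - \<epsilon>) * ln 2"
    unfolding log_weight_def L_def \<xi>2_def by (simp add: algebra_simps)
  moreover have "0 \<le> (2 * s - 1 - \<epsilon>) * L \<xi>3 + (s + \<epsilon>) * (ln 2 - (L \<xi> - L \<xi>3))
        + (ln 2 - (L \<xi>2 - L \<xi>3)) + s * (ln 2 - (L \<xi>3 - L \<xi>2))
        + s * (ln 2 - (L \<xi>3 - L \<xi>1)) + (1 - \<epsilon>) * ln 2"
    using s eps(1) d d1 d2 ln_japan_nonneg[of \<xi>3] unfolding L_def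
    by (intro add_nonneg_nonneg mult_nonneg_nonneg) (auto simp: abs_le_iff)
  ultimately show ?thesis
    by linarith
qed

lemma ln_japan_le_near:
  assumes "\<bar>\<xi> - \<xi>1\<bar> \<le> \<bar>\<xi> - \<xi>3\<bar>" and "\<bar>\<xi>3\<bar> \<le> 4 * japan (\<xi> - \<xi>3)"
  shows "ln (japan \<xi>) \<le> ln 5 + ln (japan (\<xi> - \<xi>3))"
    and "ln (japan (\<xi> - \<xi>1 - \<xi>3)) \<le> ln 5 + ln (japan (\<xi> - \<xi>3))"
proof -
  have "japan \<xi> \<le> japan (\<xi> - \<xi>3) + \<bar>\<xi>3\<bar>"
    using japan_add_le[of "\<xi> - \<xi>3" \<xi>3] by simp
  then show "ln (japan \<xi>) \<le> ln 5 + ln (japan (\<xi> - \<xi>3))"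
    using assms(2) by (intro ln_le_ln_add_ln japan_pos) simp_all
  have "japan (\<xi> - \<xi>1 - \<xi>3) \<le> japan (\<xi> - \<xi>1) + \<bar>\<xi>3\<bar>"
    using japan_add_le[of "\<xi> - \<xi>1" "- \<xi>3"] by simp
  then show "ln (japan (\<xi> - \<xi>1 - \<xi>3)) \<le> ln 5 + ln (japan (\<xi> - \<xi>3))"
    using assms(2) japan_mono[OF assms(1)] by (intro ln_le_ln_add_ln japan_pos) simp_all
qed

lemma log_weight_le_near:
  assumes eps: "0 \<le> \<epsilon>" and q: "0 \<le> q" "q \<le> min s 1"
    and near_diag: "\<bar>\<xi> - \<xi>1\<bar> \<le> \<bar>\<xi> - \<xi>3\<bar>" and near: "\<bar>\<xi>3\<bar> \<le> 4 * japan (\<xi> - \<xi>3)"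
  shows "log_weight s \<epsilon> \<xi> \<xi>1 \<xi>3
    \<le> (1 + \<epsilon>) * ln 5 + s * ln 2 + (1 + \<epsilon>) * ln (japan (\<xi> - \<xi>3)) - q * ln (japan (\<xi>1 - \<xi>3))"
proof -
  define L where "L x = ln (japan x)" for x
  define \<xi>2 b c where "\<xi>2 = \<xi> - \<xi>1 - \<xi>3" and "b = \<xi> - \<xi>3" and "c = \<xi>1 - \<xi>3"
  have L\<xi>: "L \<xi> \<le> ln 5 + L b" and L\<xi>2: "L \<xi>2 \<le> ln 5 + L b"
    using ln_japan_le_near[OF near_diag near] unfolding L_def \<xi>2_def b_def by simp_all
  have Lc: "L c \<le> ln 2 / 2 + L \<xi>1 + L \<xi>3"
    using ln_japan_add_le[of \<xi>1 "- \<xi>3"] unfolding L_def c_def by simp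
  have Lc_nonneg: "0 \<le> L c"
    unfolding L_def by (rule ln_japan_nonneg)
  have "log_weight s \<epsilon> \<xi> \<xi>1 \<xi>3 \<le> (1 + \<epsilon>) * ln 5 + s * ln 2 + (1 + \<epsilon>) * L b - q * L c"
  proof (cases "s \<le> 1")
    case True
    have "(1 + \<epsilon>) * ln 5 + s * ln 2 + (1 + \<epsilon>) * L b - q * L c - log_weight s \<epsilon> \<xi> \<xi>1 \<xi>3
        = (s + \<epsilon>) * (ln 5 + L b - L \<xi>) + (1 - s) * (ln 5 + L b - L \<xi>2)
          + s * (ln 2 / 2 + L \<xi>1 + L \<xi>3 - L c) + (s - q) * L c + s * (ln 2 / 2)"
      unfolding log_weight_def L_def \<xi>2_def by (simp add: algebra_simps)
    moreover have "0 \<le> (s + \<epsilon>) * (ln 5 + L b - L \<xi>) + (1 - s) * (ln 5 + L b - L \<xi>2)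
          + s * (ln 2 / 2 + L \<xi>1 + L \<xi>3 - L c) + (s - q) * L c + s * (ln 2 / 2)"
      using True eps q L\<xi> L\<xi>2 Lc Lc_nonneg
      by (intro add_nonneg_nonneg mult_nonneg_nonneg) auto
    ultimately show ?thesis
      by linarith
  next
    case False
    have "L \<xi> \<le> ln 2 / 2 + L \<xi>1 + L (\<xi>2 + \<xi>3)"
      using ln_japan_add_le[of \<xi>1 "\<xi>2 + \<xi>3"] unfolding L_def \<xi>2_def by simp
    moreover have "L (\<xi>2 + \<xi>3) \<le> ln 2 / 2 + L \<xi>2 + L \<xi>3"
      unfolding L_def by (rule ln_japan_add_le)
    ultimately have L\<xi>': "L \<xi> \<le> ln 2 + L \<xi>1 + L \<xi>2 + L \<xi>3"
      by linarith
    have "(1 + \<epsilon>) * ln 5 + s * ln 2 + (1 + \<epsilon>) * L b - q * L c - log_weight s \<epsilon> \<xi> \<xi>1 \<xi>3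
        = (1 + \<epsilon>) * (ln 5 + L b - L \<xi>) + (s - 1) * (ln 2 + L \<xi>1 + L \<xi>2 + L \<xi>3 - L \<xi>)
          + (ln 2 / 2 + L \<xi>1 + L \<xi>3 - L c) + (1 - q) * L c + ln 2 / 2"
      unfolding log_weight_def L_def \<xi>2_def by (simp add: algebra_simps)
    moreover have "0 \<le> (1 + \<epsilon>) * (ln 5 + L b - L \<xi>) + (s - 1) * (ln 2 + L \<xi>1 + L \<xi>2 + L \<xi>3 - L \<xi>)
          + (ln 2 / 2 + L \<xi>1 + L \<xi>3 - L c) + (1 - q) * L c + ln 2 / 2"
      using False eps q L\<xi> L\<xi>' Lc Lc_nonneg
      by (intro add_nonneg_nonneg mult_nonneg_nonneg) auto
    ultimately show ?thesis
      by linarith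
  qed
  then show ?thesis
    unfolding L_def b_def c_def .
qed

definition T_kernel :: "real \<Rightarrow> real \<Rightarrow> real \<Rightarrow> real \<Rightarrow> real \<Rightarrow> real \<Rightarrow> real" where
  "T_kernel s \<epsilon> \<sigma> \<xi> \<xi>1 \<xi>3 =
     japan \<xi> powr (s + \<epsilon>) * \<bar>\<xi> - \<xi>1 - \<xi>3\<bar> * japan (2 * (\<xi> - \<xi>1) * (\<xi> - \<xi>3)) powr (- \<sigma>)
     / (japan \<xi>1 powr s * japan (\<xi> - \<xi>1 - \<xi>3) powr s * japan \<xi>3 powr s)"

lemma measurable_T_kernel [measurable]:
  assumes [measurable]: "f \<in> borel_measurable M" "g \<in> borel_measurable M" "h \<in> borel_measurable M"
  shows "(\<lambda>x. T_kernel s \<epsilon> \<sigma> (f x) (g x) (h x)) \<in> borel_measurable M"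
  unfolding T_kernel_def by measurable

lemma T_kernel_nonneg: "0 \<le> T_kernel s \<epsilon> \<sigma> \<xi> \<xi>1 \<xi>3"
  unfolding T_kernel_def by simp

lemma T_kernel_swap: "T_kernel s \<epsilon> \<sigma> \<xi> \<xi>3 \<xi>1 = T_kernel s \<epsilon> \<sigma> \<xi> \<xi>1 \<xi>3"
  unfolding T_kernel_def by (simp add: algebra_simps)

lemma T_kernel_le_exp_log_weight:
  "T_kernel s \<epsilon> \<sigma> \<xi> \<xi>1 \<xi>3
     \<le> exp (log_weight s \<epsilon> \<xi> \<xi>1 \<xi>3) * japan (2 * (\<xi> - \<xi>1) * (\<xi> - \<xi>3)) powr (- \<sigma>)"
proof -
  define L where "L x = ln (japan x)" for x
  define \<xi>2 where "\<xi>2 = \<xi> - \<xi>1 - \<xi>3"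
  define P where "P = japan (2 * (\<xi> - \<xi>1) * (\<xi> - \<xi>3)) powr (- \<sigma>)"
  have "T_kernel s \<epsilon> \<sigma> \<xi> \<xi>1 \<xi>3
      = exp ((s + \<epsilon>) * L \<xi>) * \<bar>\<xi>2\<bar> * P / (exp (s * L \<xi>1) * exp (s * L \<xi>2) * exp (s * L \<xi>3))"
    unfolding T_kernel_def P_def L_def \<xi>2_def by (simp add: japan_powr)
  also have "\<dots> \<le> exp ((s + \<epsilon>) * L \<xi>) * exp (L \<xi>2) * P / (exp (s * L \<xi>1) * exp (s * L \<xi>2) * exp (s * L \<xi>3))"
    using abs_le_japan[of \<xi>2] unfolding L_def P_def
    by (intro divide_right_mono mult_right_mono mult_left_mono) (auto simp: japan_pos)
  also have "\<dots> = exp (log_weight s \<epsilon> \<xi> \<xi>1 \<xi>3) * P"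
    unfolding log_weight_def L_def \<xi>2_def
    by (simp add: exp_add[symmetric] algebra_simps) (simp add: exp_diff)
  finally show ?thesis
    unfolding P_def .
qed

definition kernel_majorant :: "real \<Rightarrow> real \<Rightarrow> real \<Rightarrow> real \<Rightarrow> real \<Rightarrow> real" where
  "kernel_majorant \<epsilon> \<sigma> q a b =
     (1 + japan b powr (1 + \<epsilon>) * japan (b - a) powr (- q)) * japan (2 * a * b) powr (- \<sigma>)"

lemma measurable_kernel_majorant [measurable]:
  assumes [measurable]: "f \<in> borel_measurable M" "g \<in> borel_measurable M"
  shows "(\<lambda>x. kernel_majorant \<epsilon> \<sigma> q (f x) (g x)) \<in> borel_measurable M"
  unfolding kernel_majorant_def by measurable

lemma kernel_majorant_nonneg: "0 \<le> kernel_majorant \<epsilon> \<sigma> q a b"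
  unfolding kernel_majorant_def by (intro mult_nonneg_nonneg add_nonneg_nonneg) simp_all

lemma log_weight_le:
  assumes eps: "0 \<le> \<epsilon>" "1 + \<epsilon> < 2 * min s 1" and q: "0 \<le> q" "q \<le> min s 1"
    and near_diag: "\<bar>\<xi> - \<xi>1\<bar> \<le> \<bar>\<xi> - \<xi>3\<bar>"
  shows "log_weight s \<epsilon> \<xi> \<xi>1 \<xi>3
    \<le> (3 * s + 3) * ln 5 + max 0 ((1 + \<epsilon>) * ln (japan (\<xi> - \<xi>3)) - q * ln (japan (\<xi>1 - \<xi>3)))"
    (is "_ \<le> ?\<kappa> + max 0 ?X")
proof -
  have s: "1/2 < s" "\<epsilon> < 1"
    using eps min.cobounded1[of s 1] min.cobounded2[of s 1] by linarith+
  show ?thesis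
  proof (cases "4 * japan (\<xi> - \<xi>3) \<le> \<bar>\<xi>3\<bar>")
    case True
    have "(3 * s + 2) * ln 2 \<le> ?\<kappa>"
      using s by (intro mult_mono) auto
    then show ?thesis
      using log_weight_le_far[OF eps near_diag True] max.cobounded1[of 0 ?X] by linarith
  next
    case False
    have "s * ln 2 \<le> s * ln 5"
      using s by (intro mult_left_mono) auto
    moreover have "(1 + \<epsilon> + s) * ln 5 \<le> ?\<kappa>"
      using s by (intro mult_right_mono) auto
    moreover have "(1 + \<epsilon> + s) * ln 5 = (1 + \<epsilon>) * ln 5 + s * ln 5"
      by (simp add: algebra_simps)
    moreover have "\<bar>\<xi>3\<bar> \<le> 4 * japan (\<xi> - \<xi>3)"
      using False by linarith
    ultimately show ?thesis
      using log_weight_le_near[OF eps(1) q near_diag] max.cobounded2[of ?X 0] by linarith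
  qed
qed

lemma T_kernel_le_majorant:
  assumes "0 \<le> \<epsilon>" "1 + \<epsilon> < 2 * min s 1" "0 \<le> q" "q \<le> min s 1"
    and "\<bar>\<xi> - \<xi>1\<bar> \<le> \<bar>\<xi> - \<xi>3\<bar>"
  shows "T_kernel s \<epsilon> \<sigma> \<xi> \<xi>1 \<xi>3
    \<le> 5 powr (3 * s + 3) * kernel_majorant \<epsilon> \<sigma> q (\<xi> - \<xi>1) (\<xi> - \<xi>3)"
proof -
  define \<kappa> where "\<kappa> = (3 * s + 3) * ln (5::real)"
  define X where "X = (1 + \<epsilon>) * ln (japan (\<xi> - \<xi>3)) - q * ln (japan (\<xi>1 - \<xi>3))"
  have "exp (log_weight s \<epsilon> \<xi> \<xi>1 \<xi>3) \<le> exp \<kappa> * exp (max 0 X)"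
    using log_weight_le[OF assms] unfolding \<kappa>_def X_def by (simp flip: exp_add)
  also have "\<dots> \<le> exp \<kappa> * (1 + exp X)"
    by (intro mult_left_mono) (auto simp: max_def)
  finally have exp_le: "exp (log_weight s \<epsilon> \<xi> \<xi>1 \<xi>3) \<le> exp \<kappa> * (1 + exp X)" .
  have exp_X: "exp X = japan (\<xi> - \<xi>3) powr (1 + \<epsilon>) * japan (\<xi>1 - \<xi>3) powr (- q)"
    unfolding X_def japan_powr mult_exp_exp by simp
  have "T_kernel s \<epsilon> \<sigma> \<xi> \<xi>1 \<xi>3
      \<le> exp (log_weight s \<epsilon> \<xi> \<xi>1 \<xi>3) * japan (2 * (\<xi> - \<xi>1) * (\<xi> - \<xi>3)) powr (- \<sigma>)"
    by (rule T_kernel_le_exp_log_weight)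
  also have "\<dots> \<le> exp \<kappa> * (1 + exp X) * japan (2 * (\<xi> - \<xi>1) * (\<xi> - \<xi>3)) powr (- \<sigma>)"
    using exp_le by (rule mult_right_mono) simp
  also have "\<dots> = 5 powr (3 * s + 3) * kernel_majorant \<epsilon> \<sigma> q (\<xi> - \<xi>1) (\<xi> - \<xi>3)"
    unfolding exp_X kernel_majorant_def \<kappa>_def by (simp add: powr_def)
  finally show ?thesis .
qed

lemma nn_integral_Icc_powr_neg:
  assumes "0 \<le> R" "0 \<le> p" "p < 1"
  shows "(\<integral>\<^sup>+x. ennreal (indicator {0..R} x * x powr (- p)) \<partial>lborel) = ennreal (R powr (1 - p) / (1 - p))"
proof -
  have "((\<lambda>x. x powr (- p)) has_integral (R powr (- p + 1) / (- p + 1))) {0..R}"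
    using assms by (intro has_integral_powr_from_0) auto
  then have "((\<lambda>x. if x \<in> {0..R} then x powr (- p) else 0) has_integral (R powr (1 - p) / (1 - p))) UNIV"
    by (subst has_integral_restrict_UNIV) (simp add: add.commute)
  moreover have "(\<lambda>x. if x \<in> {0..R} then x powr (- p) else 0) = (\<lambda>x. indicator {0..R} x * x powr (- p))"
    by (auto simp: indicator_def)
  ultimately have "((\<lambda>x. indicator {0..R} x * x powr (- p)) has_integral (R powr (1 - p) / (1 - p))) UNIV"
    by simp
  then show ?thesis
    by (intro nn_integral_has_integral_lborel) (auto simp: indicator_def)
qed

lemma nn_integral_cball_abs_powr_neg:
  assumes "0 \<le> R" "0 \<le> p" "p < 1"
  shows "(\<integral>\<^sup>+x. ennreal (indicator (cball c R) x * \<bar>x - c\<bar> powr (- p)) \<partial>lborel)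
    = ennreal (2 * (R powr (1 - p) / (1 - p)))"
proof -
  define g where "g x = indicator {0..R} x * x powr (- p)" for x :: real
  have [measurable]: "g \<in> borel_measurable borel"
    unfolding g_def by measurable
  have g_nonneg: "0 \<le> g x" for x
    unfolding g_def by (simp add: indicator_def)
  have "indicator (cball c R) x * \<bar>x - c\<bar> powr (- p) = g (x - c) + g (c - x)" for x
    unfolding g_def by (cases "x \<le> c") (auto simp: indicator_def abs_if dist_real_def)
  then have "(\<integral>\<^sup>+x. ennreal (indicator (cball c R) x * \<bar>x - c\<bar> powr (- p)) \<partial>lborel)
      = (\<integral>\<^sup>+x. ennreal (g (x - c)) + ennreal (g (c - x)) \<partial>lborel)"
    by (intro nn_integral_cong) (simp add: g_nonneg)
  also have "\<dots> = (\<integral>\<^sup>+x. ennreal (g (x - c)) \<partial>lborel) + (\<integral>\<^sup>+x. ennreal (g (c - x)) \<partial>lborel)"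
    by (rule nn_integral_add) auto
  also have "(\<integral>\<^sup>+x. ennreal (g (x - c)) \<partial>lborel) = (\<integral>\<^sup>+x. ennreal (g x) \<partial>lborel)"
    using nn_integral_real_affine[of "\<lambda>x. ennreal (g x)" 1 "- c"] by simp
  also have "(\<integral>\<^sup>+x. ennreal (g (c - x)) \<partial>lborel) = (\<integral>\<^sup>+x. ennreal (g x) \<partial>lborel)"
    using nn_integral_real_affine[of "\<lambda>x. ennreal (g x)" "- 1" c] by simp
  also have "(\<integral>\<^sup>+x. ennreal (g x) \<partial>lborel) = ennreal (R powr (1 - p) / (1 - p))"
    unfolding g_def using assms by (rule nn_integral_Icc_powr_neg)
  finally show ?thesis
    using assms by (simp flip: ennreal_plus)
qed

lemma nn_integral_le_two_singular_profiles:
  fixes f :: "real \<Rightarrow> ennreal"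
  assumes "AE x in lborel. f x
      \<le> ennreal A1 * ennreal (indicator (cball c1 R1) x * \<bar>x - c1\<bar> powr (- p1))
        + ennreal A2 * ennreal (indicator (cball c2 R2) x * \<bar>x - c2\<bar> powr (- p2))"
    and "0 \<le> A1" "0 \<le> A2" "0 \<le> R1" "0 \<le> R2" "0 \<le> p1" "p1 < 1" "0 \<le> p2" "p2 < 1"
  shows "(\<integral>\<^sup>+x. f x \<partial>lborel)
    \<le> ennreal (2 * (A1 * R1 powr (1 - p1)) / (1 - p1) + 2 * (A2 * R2 powr (1 - p2)) / (1 - p2))"
proof -
  have [measurable]: "cball c R \<in> sets borel" for c R :: real
    by (simp add: borel_closed)
  have "(\<integral>\<^sup>+x. f x \<partial>lborel)
      \<le> (\<integral>\<^sup>+x. ennreal A1 * ennreal (indicator (cball c1 R1) x * \<bar>x - c1\<bar> powr (- p1))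
        + ennreal A2 * ennreal (indicator (cball c2 R2) x * \<bar>x - c2\<bar> powr (- p2)) \<partial>lborel)"
    using assms(1) by (rule nn_integral_mono_AE)
  also have "\<dots> = ennreal A1 * ennreal (2 * (R1 powr (1 - p1) / (1 - p1)))
      + ennreal A2 * ennreal (2 * (R2 powr (1 - p2) / (1 - p2)))"
    using assms by (simp add: nn_integral_add nn_integral_cmult nn_integral_cball_abs_powr_neg)
  also have "\<dots> = ennreal (2 * (A1 * R1 powr (1 - p1)) / (1 - p1) + 2 * (A2 * R2 powr (1 - p2)) / (1 - p2))"
    using assms by (simp add: mult_ac flip: ennreal_mult ennreal_plus)
  finally show ?thesis .
qed

lemma resonance_factor_le:
  assumes "0 \<le> \<epsilon>" "0 \<le> \<sigma>" "1 < \<bar>b\<bar>" "a \<noteq> 0"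
  shows "japan (2 * a * b) powr (- \<sigma>) \<le> (2 * \<bar>b\<bar>) powr (- \<sigma>) * \<bar>a\<bar> powr (- \<sigma>)"
    and "japan b powr (1 + \<epsilon>) * japan (2 * a * b) powr (- \<sigma>)
      \<le> (2 * \<bar>b\<bar>) powr (1 + \<epsilon> - \<sigma>) * \<bar>a\<bar> powr (- \<sigma>)"
proof -
  have "2 * \<bar>b\<bar> * \<bar>a\<bar> \<le> japan (2 * a * b)"
    using abs_le_japan[of "2 * a * b"] by (simp add: abs_mult mult_ac)
  then have "japan (2 * a * b) powr (- \<sigma>) \<le> (2 * \<bar>b\<bar> * \<bar>a\<bar>) powr (- \<sigma>)"
    using assms by (intro powr_mono2') simp_all
  then show Z: "japan (2 * a * b) powr (- \<sigma>) \<le> (2 * \<bar>b\<bar>) powr (- \<sigma>) * \<bar>a\<bar> powr (- \<sigma>)"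
    by (simp add: powr_mult)
  have "japan b \<le> 2 * \<bar>b\<bar>"
    using japan_le_one_plus_abs[of b] assms by simp
  then have "japan b powr (1 + \<epsilon>) \<le> (2 * \<bar>b\<bar>) powr (1 + \<epsilon>)"
    using assms japan_pos[of b] by (intro powr_mono2) simp_all
  then have "japan b powr (1 + \<epsilon>) * japan (2 * a * b) powr (- \<sigma>)
      \<le> (2 * \<bar>b\<bar>) powr (1 + \<epsilon>) * ((2 * \<bar>b\<bar>) powr (- \<sigma>) * \<bar>a\<bar> powr (- \<sigma>))"
    using Z by (intro mult_mono) simp_all
  then show "japan b powr (1 + \<epsilon>) * japan (2 * a * b) powr (- \<sigma>)
      \<le> (2 * \<bar>b\<bar>) powr (1 + \<epsilon> - \<sigma>) * \<bar>a\<bar> powr (- \<sigma>)"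
    by (simp add: powr_add[symmetric] mult.assoc[symmetric])
qed

lemma kernel_majorant_le_singular:
  assumes "0 \<le> \<epsilon>" "0 \<le> q" "0 \<le> \<sigma>"
    and "1 < \<bar>b\<bar>" "a \<noteq> 0" "a \<noteq> b" "\<bar>a\<bar> \<le> \<bar>b\<bar>"
  shows "kernel_majorant \<epsilon> \<sigma> q a b \<le>
     ((2 * \<bar>b\<bar>) powr (- \<sigma>) + (2 * \<bar>b\<bar>) powr (1 + \<epsilon> - \<sigma>) * (\<bar>b\<bar> / 2) powr (- q)) * \<bar>a\<bar> powr (- \<sigma>)
     + (2 * \<bar>b\<bar>) powr (1 + \<epsilon> - \<sigma>) * (\<bar>b\<bar> / 2) powr (- \<sigma>) * \<bar>a - b\<bar> powr (- q)"
proof -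
  define B where "B = \<bar>b\<bar>"
  define X Y Z where "X = japan b powr (1 + \<epsilon>)" and "Y = japan (b - a) powr (- q)"
    and "Z = japan (2 * a * b) powr (- \<sigma>)"
  have B: "0 < B" "0 < \<bar>a\<bar>"
    using assms unfolding B_def by auto
  have Z: "Z \<le> (2 * B) powr (- \<sigma>) * \<bar>a\<bar> powr (- \<sigma>)"
    and XZ: "X * Z \<le> (2 * B) powr (1 + \<epsilon> - \<sigma>) * \<bar>a\<bar> powr (- \<sigma>)"
    using resonance_factor_le[of \<epsilon> \<sigma> b a] assms unfolding X_def Z_def B_def by simp_all
  have "X * Z * Y \<le> (2 * B) powr (1 + \<epsilon> - \<sigma>) * (B / 2) powr (- q) * \<bar>a\<bar> powr (- \<sigma>)
      + (2 * B) powr (1 + \<epsilon> - \<sigma>) * (B / 2) powr (- \<sigma>) * \<bar>a - b\<bar> powr (- q)"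
  proof (cases "B / 2 \<le> \<bar>b - a\<bar>")
    case True
    then have "Y \<le> (B / 2) powr (- q)"
      unfolding Y_def using B assms abs_le_japan[of "b - a"] by (intro powr_mono2') simp_all
    then have "X * Z * Y \<le> (2 * B) powr (1 + \<epsilon> - \<sigma>) * \<bar>a\<bar> powr (- \<sigma>) * (B / 2) powr (- q)"
      by (rule mult_mono[OF XZ]) (simp_all add: Y_def)
    then show ?thesis
      by (simp add: mult_ac add_increasing2)
  next
    case False
    then have "B / 2 \<le> \<bar>a\<bar>"
      unfolding B_def by linarith
    then have "\<bar>a\<bar> powr (- \<sigma>) \<le> (B / 2) powr (- \<sigma>)"
      using B assms by (intro powr_mono2') simp_all
    then have "X * Z \<le> (2 * B) powr (1 + \<epsilon> - \<sigma>) * (B / 2) powr (- \<sigma>)"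
      using XZ by (meson dual_order.trans mult_left_mono powr_ge_zero)
    moreover have "Y \<le> \<bar>a - b\<bar> powr (- q)"
      unfolding Y_def using assms abs_le_japan[of "b - a"]
      by (subst abs_minus_commute) (intro powr_mono2', simp_all)
    ultimately have "X * Z * Y \<le> (2 * B) powr (1 + \<epsilon> - \<sigma>) * (B / 2) powr (- \<sigma>) * \<bar>a - b\<bar> powr (- q)"
      by (rule mult_mono) (simp_all add: Y_def)
    then show ?thesis
      by (simp add: add_increasing)
  qed
  moreover have "kernel_majorant \<epsilon> \<sigma> q a b = Z + X * Z * Y"
    unfolding kernel_majorant_def X_def Y_def Z_def by (simp add: algebra_simps)
  ultimately show ?thesis
    using Z unfolding B_def distrib_right by linarith
qed

lemma singular_coefficients_le:
  fixes B :: real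
  assumes eps: "\<epsilon> \<le> 1" and q: "0 \<le> q" "q \<le> 1" and sigma: "1/2 \<le> \<sigma>"
    and balance: "2 + \<epsilon> - 2 * \<sigma> - q \<le> 0" and B: "1 \<le> B"
  shows "((2 * B) powr (- \<sigma>) + (2 * B) powr (1 + \<epsilon> - \<sigma>) * (B / 2) powr (- q)) * B powr (1 - \<sigma>) \<le> 9"
    and "(2 * B) powr (1 + \<epsilon> - \<sigma>) * (B / 2) powr (- \<sigma>) * (2 * B) powr (1 - q) \<le> 8"
proof -
  define l t where "l = ln B" and "t = ln (2::real)"
  have l: "0 \<le> l" and t: "0 \<le> t"
    using B unfolding l_def t_def by simp_all
  have B_pos: "0 < B" "0 < 2 * B" "0 < B / 2"
    using B by simp_all
  have ln_2B: "ln (2 * B) = t + l" and ln_B2: "ln (B / 2) = l - t"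
    using B unfolding t_def l_def by (simp_all add: ln_mult ln_div)
  have pow: "x powr r = exp (r * ln x)" if "0 < x" for x r :: real
    using that by (simp add: powr_def)
  have exp_3t: "exp (3 * t) = 8"
    unfolding t_def by (subst exp_of_nat_mult[of 3, simplified]) simp
  have "((2 * B) powr (- \<sigma>) + (2 * B) powr (1 + \<epsilon> - \<sigma>) * (B / 2) powr (- q)) * B powr (1 - \<sigma>)
      = exp (- \<sigma> * t + (1 - 2 * \<sigma>) * l) + exp ((1 + \<epsilon> - \<sigma> + q) * t + (2 + \<epsilon> - 2 * \<sigma> - q) * l)"
    unfolding pow[OF B_pos(1)] pow[OF B_pos(2)] pow[OF B_pos(3)] ln_2B ln_B2 l_def[symmetric]
    by (simp add: distrib_right mult_exp_exp algebra_simps)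
  also have "\<dots> \<le> exp 0 + exp (3 * t)"
  proof (intro add_mono)
    have "(1 - 2 * \<sigma>) * l \<le> 0" "0 \<le> \<sigma> * t"
      using sigma l t by (simp_all add: mult_nonpos_nonneg)
    then show "exp (- \<sigma> * t + (1 - 2 * \<sigma>) * l) \<le> exp 0"
      by simp
    have "(1 + \<epsilon> - \<sigma> + q) * t \<le> 3 * t" "(2 + \<epsilon> - 2 * \<sigma> - q) * l \<le> 0"
      using eps q sigma balance l t by (simp_all add: mult_right_mono mult_nonpos_nonneg)
    then show "exp ((1 + \<epsilon> - \<sigma> + q) * t + (2 + \<epsilon> - 2 * \<sigma> - q) * l) \<le> exp (3 * t)"
      by simp
  qed
  finally show "((2 * B) powr (- \<sigma>) + (2 * B) powr (1 + \<epsilon> - \<sigma>) * (B / 2) powr (- q)) * B powr (1 - \<sigma>) \<le> 9"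
    using exp_3t by simp
  have "(2 * B) powr (1 + \<epsilon> - \<sigma>) * (B / 2) powr (- \<sigma>) * (2 * B) powr (1 - q)
      = exp ((2 + \<epsilon> - q) * t + (2 + \<epsilon> - 2 * \<sigma> - q) * l)"
    unfolding pow[OF B_pos(2)] pow[OF B_pos(3)] ln_2B ln_B2
    by (simp add: mult_exp_exp algebra_simps)
  also have "\<dots> \<le> exp (3 * t)"
  proof -
    have "(2 + \<epsilon> - q) * t \<le> 3 * t" "(2 + \<epsilon> - 2 * \<sigma> - q) * l \<le> 0"
      using eps q balance l t by (simp_all add: mult_right_mono mult_nonpos_nonneg)
    then show ?thesis
      by simp
  qed
  finally show "(2 * B) powr (1 + \<epsilon> - \<sigma>) * (B / 2) powr (- \<sigma>) * (2 * B) powr (1 - q) \<le> 8"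
    using exp_3t by simp
qed

lemma nn_integral_kernel_majorant_small:
  assumes "0 \<le> \<epsilon>" "\<epsilon> \<le> 1" "0 \<le> q" "0 \<le> \<sigma>" and "\<bar>b\<bar> \<le> 1"
  shows "(\<integral>\<^sup>+a. ennreal (kernel_majorant \<epsilon> \<sigma> q a b * (if \<bar>a\<bar> \<le> \<bar>b\<bar> then 1 else 0)) \<partial>lborel)
    \<le> ennreal 10"
proof -
  have "kernel_majorant \<epsilon> \<sigma> q a b \<le> 5" for a
  proof -
    have "japan b \<le> 2"
      using japan_le_one_plus_abs[of b] assms by simp
    then have "japan b powr (1 + \<epsilon>) \<le> 2 powr (1 + \<epsilon>)"
      using assms japan_pos[of b] by (intro powr_mono2) simp_all
    also have "\<dots> \<le> 2 powr 2"
      using assms by (intro powr_mono) simp_all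
    finally have "japan b powr (1 + \<epsilon>) * japan (b - a) powr (- q) \<le> 4 * 1"
      using japan_powr_neg_le_one assms by (intro mult_mono) simp_all
    moreover have "japan (2 * a * b) powr (- \<sigma>) \<le> 1"
      using assms by (intro japan_powr_neg_le_one)
    ultimately have "(1 + japan b powr (1 + \<epsilon>) * japan (b - a) powr (- q)) * japan (2 * a * b) powr (- \<sigma>)
        \<le> 5 * 1"
      by (intro mult_mono) simp_all
    then show ?thesis
      unfolding kernel_majorant_def by simp
  qed
  then have "ennreal (kernel_majorant \<epsilon> \<sigma> q a b) \<le> ennreal 5" for a
    by (rule ennreal_leI)
  then have "ennreal (kernel_majorant \<epsilon> \<sigma> q a b * (if \<bar>a\<bar> \<le> \<bar>b\<bar> then 1 else 0))
      \<le> ennreal 5 * indicator {-1..1} a" for a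
    using assms by (auto simp: indicator_def)
  then have "(\<integral>\<^sup>+a. ennreal (kernel_majorant \<epsilon> \<sigma> q a b * (if \<bar>a\<bar> \<le> \<bar>b\<bar> then 1 else 0)) \<partial>lborel)
      \<le> (\<integral>\<^sup>+a. ennreal 5 * indicator {-1..1::real} a \<partial>lborel)"
    by (intro nn_integral_mono)
  also have "\<dots> = ennreal 10"
    by (simp add: nn_integral_cmult_indicator flip: ennreal_mult)
  finally show ?thesis .
qed

lemma nn_integral_kernel_majorant_large:
  assumes eps: "0 \<le> \<epsilon>" "\<epsilon> \<le> 1" and q: "0 \<le> q" "q < 1" and sigma: "1/2 \<le> \<sigma>" "\<sigma> < 1"
    and balance: "2 + \<epsilon> - 2 * \<sigma> - q \<le> 0" and b: "1 < \<bar>b\<bar>"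
  shows "(\<integral>\<^sup>+a. ennreal (kernel_majorant \<epsilon> \<sigma> q a b * (if \<bar>a\<bar> \<le> \<bar>b\<bar> then 1 else 0)) \<partial>lborel)
    \<le> ennreal (18 / (1 - \<sigma>) + 16 / (1 - q))"
proof -
  define B where "B = \<bar>b\<bar>"
  define A1 where "A1 = (2 * B) powr (- \<sigma>) + (2 * B) powr (1 + \<epsilon> - \<sigma>) * (B / 2) powr (- q)"
  define A2 where "A2 = (2 * B) powr (1 + \<epsilon> - \<sigma>) * (B / 2) powr (- \<sigma>)"
  have A_nonneg: "0 \<le> A1" "0 \<le> A2"
    unfolding A1_def A2_def by simp_all
  have "AE a in lborel. ennreal (kernel_majorant \<epsilon> \<sigma> q a b * (if \<bar>a\<bar> \<le> \<bar>b\<bar> then 1 else 0))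
      \<le> ennreal A1 * ennreal (indicator (cball 0 B) a * \<bar>a - 0\<bar> powr (- \<sigma>))
        + ennreal A2 * ennreal (indicator (cball b (2 * B)) a * \<bar>a - b\<bar> powr (- q))"
    using AE_lborel_singleton[of 0] AE_lborel_singleton[of b]
  proof eventually_elim
    case (elim a)
    show ?case
    proof (cases "\<bar>a\<bar> \<le> \<bar>b\<bar>")
      case True
      then have "kernel_majorant \<epsilon> \<sigma> q a b \<le> A1 * \<bar>a\<bar> powr (- \<sigma>) + A2 * \<bar>a - b\<bar> powr (- q)"
        using kernel_majorant_le_singular[of \<epsilon> q \<sigma> b a] eps q sigma b elim
        unfolding A1_def A2_def B_def by simp
      moreover have "a \<in> cball 0 B" "a \<in> cball b (2 * B)"
        using True unfolding B_def by (auto simp: dist_real_def)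
      ultimately show ?thesis
        using True A_nonneg by (simp add: ennreal_leI flip: ennreal_mult ennreal_plus)
    qed simp
  qed
  then have "(\<integral>\<^sup>+a. ennreal (kernel_majorant \<epsilon> \<sigma> q a b * (if \<bar>a\<bar> \<le> \<bar>b\<bar> then 1 else 0)) \<partial>lborel)
      \<le> ennreal (2 * (A1 * B powr (1 - \<sigma>)) / (1 - \<sigma>) + 2 * (A2 * (2 * B) powr (1 - q)) / (1 - q))"
    by (rule nn_integral_le_two_singular_profiles) (use A_nonneg sigma q in \<open>auto simp: B_def\<close>)
  also have "\<dots> \<le> ennreal (18 / (1 - \<sigma>) + 16 / (1 - q))"
  proof -
    have "1 \<le> B"
      using b unfolding B_def by simp
    then have "A1 * B powr (1 - \<sigma>) \<le> 9" "A2 * (2 * B) powr (1 - q) \<le> 8"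
      unfolding A1_def A2_def using singular_coefficients_le[of \<epsilon> q \<sigma> B] eps q sigma balance
      by simp_all
    then show ?thesis
      using sigma q by (intro ennreal_leI add_mono divide_right_mono) simp_all
  qed
  finally show ?thesis .
qed

lemma nn_integral_kernel_majorant_le:
  assumes "0 \<le> \<epsilon>" "\<epsilon> \<le> 1" "0 \<le> q" "q < 1" "1/2 \<le> \<sigma>" "\<sigma> < 1"
    and "2 + \<epsilon> - 2 * \<sigma> - q \<le> 0"
  shows "(\<integral>\<^sup>+a. ennreal (kernel_majorant \<epsilon> \<sigma> q a b * (if \<bar>a\<bar> \<le> \<bar>b\<bar> then 1 else 0)) \<partial>lborel)
    \<le> ennreal (10 + 18 / (1 - \<sigma>) + 16 / (1 - q))"
proof (cases "\<bar>b\<bar> \<le> 1")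
  case True
  then show ?thesis
    using nn_integral_kernel_majorant_small[of \<epsilon> q \<sigma> b] assms
    by (auto intro: order_trans ennreal_leI)
next
  case False
  then show ?thesis
    using nn_integral_kernel_majorant_large[of \<epsilon> q \<sigma> b] assms
    by (auto intro: order_trans ennreal_leI)
qed

lemma Cauchy_Schwarz_nn_integral_weighted:
  fixes w u v :: "'a \<Rightarrow> ennreal"
  assumes [measurable]: "w \<in> borel_measurable M" "u \<in> borel_measurable M" "v \<in> borel_measurable M"
  shows "(\<integral>\<^sup>+x. w x * (u x * v x) \<partial>M)\<^sup>2 \<le> (\<integral>\<^sup>+x. w x * (u x)\<^sup>2 \<partial>M) * (\<integral>\<^sup>+x. w x * (v x)\<^sup>2 \<partial>M)"
proof -
  have "(\<integral>\<^sup>+x. u x * v x \<partial>density M w)\<^sup>2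
      \<le> (\<integral>\<^sup>+x. u x ^ 2 \<partial>density M w) * (\<integral>\<^sup>+x. v x ^ 2 \<partial>density M w)"
    by (rule Cauchy_Schwarz_nn_integral) simp_all
  then show ?thesis
    by (simp add: nn_integral_density)
qed

lemma Schur_test_inner_le:
  fixes k :: "real \<times> real \<times> real \<Rightarrow> ennreal" and G :: "real \<Rightarrow> ennreal"
  assumes [measurable]: "k \<in> borel_measurable borel" "G \<in> borel_measurable borel"
    and fiber: "\<And>\<xi>3. (\<integral>\<^sup>+\<xi>1. k (\<xi>, \<xi>1, \<xi>3) \<partial>lborel) \<le> S"
  shows "(\<integral>\<^sup>+p. k (\<xi>, fst p, snd p) * (G (snd p))\<^sup>2 \<partial>(lborel \<Otimes>\<^sub>M lborel))
    \<le> S * (\<integral>\<^sup>+x. (G x)\<^sup>2 \<partial>lborel)"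
proof -
  have meas: "(\<lambda>p. k (\<xi>, fst p, snd p) * (G (snd p))\<^sup>2) \<in> borel_measurable (lborel \<Otimes>\<^sub>M lborel)"
    by measurable
  then have "(\<integral>\<^sup>+p. k (\<xi>, fst p, snd p) * (G (snd p))\<^sup>2 \<partial>(lborel \<Otimes>\<^sub>M lborel))
      = (\<integral>\<^sup>+\<xi>3. (\<integral>\<^sup>+\<xi>1. k (\<xi>, \<xi>1, \<xi>3) * (G \<xi>3)\<^sup>2 \<partial>lborel) \<partial>lborel)"
    using lborel_pair.nn_integral_snd[OF meas] by simp
  also have "\<dots> = (\<integral>\<^sup>+\<xi>3. (\<integral>\<^sup>+\<xi>1. k (\<xi>, \<xi>1, \<xi>3) \<partial>lborel) * (G \<xi>3)\<^sup>2 \<partial>lborel)"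
    by (intro nn_integral_cong nn_integral_multc) measurable
  also have "\<dots> \<le> (\<integral>\<^sup>+\<xi>3. S * (G \<xi>3)\<^sup>2 \<partial>lborel)"
    by (intro nn_integral_mono mult_right_mono fiber) simp
  also have "\<dots> = S * (\<integral>\<^sup>+x. (G x)\<^sup>2 \<partial>lborel)"
    by (rule nn_integral_cmult) measurable
  finally show ?thesis .
qed

lemma Schur_test_outer_le:
  fixes k :: "real \<times> real \<times> real \<Rightarrow> ennreal" and G1 G2 :: "real \<Rightarrow> ennreal"
  assumes [measurable]: "k \<in> borel_measurable borel" "G1 \<in> borel_measurable borel" "G2 \<in> borel_measurable borel"
    and fiber: "\<And>\<xi>1 \<xi>2. (\<integral>\<^sup>+\<xi>. k (\<xi>, \<xi>1, \<xi> - \<xi>1 - \<xi>2) \<partial>lborel) \<le> S"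
  shows "(\<integral>\<^sup>+\<xi>. (\<integral>\<^sup>+p. k (\<xi>, fst p, snd p) * (G1 (fst p) * G2 (\<xi> - fst p - snd p))\<^sup>2 \<partial>(lborel \<Otimes>\<^sub>M lborel)) \<partial>lborel)
    \<le> S * (\<integral>\<^sup>+x. (G1 x)\<^sup>2 \<partial>lborel) * (\<integral>\<^sup>+x. (G2 x)\<^sup>2 \<partial>lborel)"
proof -
  define N2 where "N2 = (\<integral>\<^sup>+x. (G2 x)\<^sup>2 \<partial>lborel)"
  have inner: "(\<integral>\<^sup>+p. k (\<xi>, fst p, snd p) * (G1 (fst p) * G2 (\<xi> - fst p - snd p))\<^sup>2 \<partial>(lborel \<Otimes>\<^sub>M lborel))
      = (\<integral>\<^sup>+\<xi>1. (\<integral>\<^sup>+\<xi>3. k (\<xi>, \<xi>1, \<xi>3) * (G1 \<xi>1)\<^sup>2 * (G2 (\<xi> - \<xi>1 - \<xi>3))\<^sup>2 \<partial>lborel) \<partial>lborel)" for \<xi>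
  proof -
    have meas: "(\<lambda>p. k (\<xi>, fst p, snd p) * (G1 (fst p) * G2 (\<xi> - fst p - snd p))\<^sup>2)
        \<in> borel_measurable (lborel \<Otimes>\<^sub>M lborel)"
      by measurable
    then show ?thesis
      using lborel.nn_integral_fst[OF meas] by (simp add: power_mult_distrib mult_ac)
  qed
  have "(\<integral>\<^sup>+\<xi>. (\<integral>\<^sup>+p. k (\<xi>, fst p, snd p) * (G1 (fst p) * G2 (\<xi> - fst p - snd p))\<^sup>2 \<partial>(lborel \<Otimes>\<^sub>M lborel)) \<partial>lborel)
      = (\<integral>\<^sup>+\<xi>. (\<integral>\<^sup>+\<xi>1. (\<integral>\<^sup>+\<xi>3. k (\<xi>, \<xi>1, \<xi>3) * (G1 \<xi>1)\<^sup>2 * (G2 (\<xi> - \<xi>1 - \<xi>3))\<^sup>2 \<partial>lborel) \<partial>lborel) \<partial>lborel)"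
    by (simp only: inner)
  also have "\<dots> = (\<integral>\<^sup>+\<xi>1. (\<integral>\<^sup>+\<xi>. (\<integral>\<^sup>+\<xi>3. k (\<xi>, \<xi>1, \<xi>3) * (G1 \<xi>1)\<^sup>2 * (G2 (\<xi> - \<xi>1 - \<xi>3))\<^sup>2 \<partial>lborel) \<partial>lborel) \<partial>lborel)"
    by (rule lborel_pair.Fubini') measurable
  also have "\<dots> = (\<integral>\<^sup>+\<xi>1. (\<integral>\<^sup>+\<xi>. (\<integral>\<^sup>+\<xi>2. k (\<xi>, \<xi>1, \<xi> - \<xi>1 - \<xi>2) * (G1 \<xi>1)\<^sup>2 * (G2 \<xi>2)\<^sup>2 \<partial>lborel) \<partial>lborel) \<partial>lborel)"
  proof (rule nn_integral_cong, rule nn_integral_cong)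
    fix \<xi>1 \<xi>
    show "(\<integral>\<^sup>+\<xi>3. k (\<xi>, \<xi>1, \<xi>3) * (G1 \<xi>1)\<^sup>2 * (G2 (\<xi> - \<xi>1 - \<xi>3))\<^sup>2 \<partial>lborel)
        = (\<integral>\<^sup>+\<xi>2. k (\<xi>, \<xi>1, \<xi> - \<xi>1 - \<xi>2) * (G1 \<xi>1)\<^sup>2 * (G2 \<xi>2)\<^sup>2 \<partial>lborel)"
      using nn_integral_real_affine[of "\<lambda>\<xi>3. k (\<xi>, \<xi>1, \<xi>3) * (G1 \<xi>1)\<^sup>2 * (G2 (\<xi> - \<xi>1 - \<xi>3))\<^sup>2" "- 1" "\<xi> - \<xi>1"]
      by simp
  qed
  also have "\<dots> = (\<integral>\<^sup>+\<xi>1. (\<integral>\<^sup>+\<xi>2. (\<integral>\<^sup>+\<xi>. k (\<xi>, \<xi>1, \<xi> - \<xi>1 - \<xi>2) * (G1 \<xi>1)\<^sup>2 * (G2 \<xi>2)\<^sup>2 \<partial>lborel) \<partial>lborel) \<partial>lborel)"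
    by (intro nn_integral_cong lborel_pair.Fubini') measurable
  also have "\<dots> = (\<integral>\<^sup>+\<xi>1. (\<integral>\<^sup>+\<xi>2. (\<integral>\<^sup>+\<xi>. k (\<xi>, \<xi>1, \<xi> - \<xi>1 - \<xi>2) \<partial>lborel) * ((G1 \<xi>1)\<^sup>2 * (G2 \<xi>2)\<^sup>2) \<partial>lborel) \<partial>lborel)"
    by (intro nn_integral_cong) (simp add: mult.assoc nn_integral_multc)
  also have "\<dots> \<le> (\<integral>\<^sup>+\<xi>1. (\<integral>\<^sup>+\<xi>2. S * ((G1 \<xi>1)\<^sup>2 * (G2 \<xi>2)\<^sup>2) \<partial>lborel) \<partial>lborel)"
    by (intro nn_integral_mono mult_right_mono fiber) simp
  also have "\<dots> = (\<integral>\<^sup>+\<xi>1. S * (G1 \<xi>1)\<^sup>2 * N2 \<partial>lborel)"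
    unfolding N2_def by (intro nn_integral_cong) (simp add: nn_integral_cmult mult.assoc[symmetric])
  also have "\<dots> = S * (\<integral>\<^sup>+x. (G1 x)\<^sup>2 \<partial>lborel) * N2"
    by (simp add: nn_integral_cmult nn_integral_multc mult.assoc[symmetric])
  finally show ?thesis
    unfolding N2_def .
qed

lemma trilinear_Schur_test:
  fixes k :: "real \<times> real \<times> real \<Rightarrow> ennreal" and G1 G2 G3 :: "real \<Rightarrow> ennreal"
  assumes [measurable]: "k \<in> borel_measurable borel"
      "G1 \<in> borel_measurable borel" "G2 \<in> borel_measurable borel" "G3 \<in> borel_measurable borel"
    and fiber1: "\<And>\<xi> \<xi>3. (\<integral>\<^sup>+\<xi>1. k (\<xi>, \<xi>1, \<xi>3) \<partial>lborel) \<le> S"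
    and fiber2: "\<And>\<xi>1 \<xi>2. (\<integral>\<^sup>+\<xi>. k (\<xi>, \<xi>1, \<xi> - \<xi>1 - \<xi>2) \<partial>lborel) \<le> S"
  shows "(\<integral>\<^sup>+\<xi>. (\<integral>\<^sup>+p. k (\<xi>, fst p, snd p) * G1 (fst p) * G2 (\<xi> - fst p - snd p) * G3 (snd p)
      \<partial>(lborel \<Otimes>\<^sub>M lborel))\<^sup>2 \<partial>lborel)
    \<le> S\<^sup>2 * (\<integral>\<^sup>+x. (G1 x)\<^sup>2 \<partial>lborel) * (\<integral>\<^sup>+x. (G2 x)\<^sup>2 \<partial>lborel) * (\<integral>\<^sup>+x. (G3 x)\<^sup>2 \<partial>lborel)"
proof -
  define N1 N2 N3 where "N1 = (\<integral>\<^sup>+x. (G1 x)\<^sup>2 \<partial>lborel)" and "N2 = (\<integral>\<^sup>+x. (G2 x)\<^sup>2 \<partial>lborel)"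
    and "N3 = (\<integral>\<^sup>+x. (G3 x)\<^sup>2 \<partial>lborel)"
  define B where "B \<xi> = (\<integral>\<^sup>+p. k (\<xi>, fst p, snd p) * (G1 (fst p) * G2 (\<xi> - fst p - snd p))\<^sup>2
      \<partial>(lborel \<Otimes>\<^sub>M lborel))" for \<xi>
  have "(\<integral>\<^sup>+p. k (\<xi>, fst p, snd p) * G1 (fst p) * G2 (\<xi> - fst p - snd p) * G3 (snd p)
      \<partial>(lborel \<Otimes>\<^sub>M lborel))\<^sup>2 \<le> (S * N3) * B \<xi>" for \<xi>
  proof -
    have "(\<integral>\<^sup>+p. k (\<xi>, fst p, snd p) * G1 (fst p) * G2 (\<xi> - fst p - snd p) * G3 (snd p)
        \<partial>(lborel \<Otimes>\<^sub>M lborel))\<^sup>2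
      = (\<integral>\<^sup>+p. k (\<xi>, fst p, snd p) * (G3 (snd p) * (G1 (fst p) * G2 (\<xi> - fst p - snd p)))
        \<partial>(lborel \<Otimes>\<^sub>M lborel))\<^sup>2"
      by (simp add: mult_ac)
    also have "\<dots> \<le> (\<integral>\<^sup>+p. k (\<xi>, fst p, snd p) * (G3 (snd p))\<^sup>2 \<partial>(lborel \<Otimes>\<^sub>M lborel)) * B \<xi>"
      unfolding B_def by (rule Cauchy_Schwarz_nn_integral_weighted) measurable
    also have "\<dots> \<le> (S * N3) * B \<xi>"
      unfolding N3_def by (intro mult_right_mono Schur_test_inner_le fiber1) simp_all
    finally show ?thesis .
  qed
  then have "(\<integral>\<^sup>+\<xi>. (\<integral>\<^sup>+p. k (\<xi>, fst p, snd p) * G1 (fst p) * G2 (\<xi> - fst p - snd p) * G3 (snd p)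
      \<partial>(lborel \<Otimes>\<^sub>M lborel))\<^sup>2 \<partial>lborel) \<le> (\<integral>\<^sup>+\<xi>. (S * N3) * B \<xi> \<partial>lborel)"
    by (intro nn_integral_mono)
  also have "\<dots> = (S * N3) * (\<integral>\<^sup>+\<xi>. B \<xi> \<partial>lborel)"
    unfolding B_def by (rule nn_integral_cmult) measurable
  also have "\<dots> \<le> (S * N3) * (S * N1 * N2)"
    unfolding B_def N1_def N2_def by (intro mult_left_mono Schur_test_outer_le fiber2) simp_all
  also have "\<dots> = S\<^sup>2 * N1 * N2 * N3"
    by (simp add: power2_eq_square mult_ac)
  finally show ?thesis
    unfolding N1_def N2_def N3_def .
qed

lemma nn_integral_pair_swap:
  fixes g :: "real \<times> real \<Rightarrow> ennreal"
  assumes [measurable]: "g \<in> borel_measurable (lborel \<Otimes>\<^sub>M lborel)"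
  shows "(\<integral>\<^sup>+p. g (snd p, fst p) \<partial>(lborel \<Otimes>\<^sub>M lborel)) = (\<integral>\<^sup>+p. g p \<partial>(lborel \<Otimes>\<^sub>M lborel))"
proof -
  have "(\<integral>\<^sup>+p. g (snd p, fst p) \<partial>(lborel \<Otimes>\<^sub>M lborel)) = (\<integral>\<^sup>+y. (\<integral>\<^sup>+x. g (y, x) \<partial>lborel) \<partial>lborel)"
    by (subst lborel_pair.nn_integral_snd[symmetric]) simp_all
  also have "\<dots> = (\<integral>\<^sup>+p. g p \<partial>(lborel \<Otimes>\<^sub>M lborel))"
    by (rule lborel.nn_integral_fst) simp
  finally show ?thesis .
qed

lemma ennreal_add_power2_le: "((a::ennreal) + b)\<^sup>2 \<le> 2 * a\<^sup>2 + 2 * b\<^sup>2"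
proof -
  have "(a + b)\<^sup>2 = a\<^sup>2 + b\<^sup>2 + 2 * a * b"
    by (rule power2_sum)
  also have "\<dots> \<le> a\<^sup>2 + b\<^sup>2 + (a\<^sup>2 + b\<^sup>2)"
    by (intro add_left_mono sum_of_squares_ge_ennreal)
  also have "\<dots> = 2 * a\<^sup>2 + 2 * b\<^sup>2"
    by (simp add: mult_2 algebra_simps)
  finally show ?thesis .
qed

lemma nn_integral_kernel_reflection_le:
  fixes K :: "real \<Rightarrow> real \<Rightarrow> real \<Rightarrow> ennreal" and k :: "real \<times> real \<times> real \<Rightarrow> ennreal"
    and G1 G2 G3 :: "real \<Rightarrow> ennreal"
  assumes [measurable]: "k \<in> borel_measurable borel"
      "G1 \<in> borel_measurable borel" "G2 \<in> borel_measurable borel" "G3 \<in> borel_measurable borel"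
    and split: "\<And>\<xi>1 \<xi>3. K \<xi> \<xi>1 \<xi>3 \<le> k (\<xi>, \<xi>1, \<xi>3) + k (\<xi>, \<xi>3, \<xi>1)"
  shows "(\<integral>\<^sup>+p. K \<xi> (fst p) (snd p) * G1 (fst p) * G2 (\<xi> - fst p - snd p) * G3 (snd p) \<partial>(lborel \<Otimes>\<^sub>M lborel))
    \<le> (\<integral>\<^sup>+p. k (\<xi>, fst p, snd p) * G1 (fst p) * G2 (\<xi> - fst p - snd p) * G3 (snd p) \<partial>(lborel \<Otimes>\<^sub>M lborel))
      + (\<integral>\<^sup>+p. k (\<xi>, fst p, snd p) * G3 (fst p) * G2 (\<xi> - fst p - snd p) * G1 (snd p) \<partial>(lborel \<Otimes>\<^sub>M lborel))"
proof -
  define g where "g p = k (\<xi>, fst p, snd p) * G3 (fst p) * G2 (\<xi> - fst p - snd p) * G1 (snd p)" for p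
  have "g \<in> borel_measurable (lborel \<Otimes>\<^sub>M lborel)"
    unfolding g_def by measurable
  then have swap: "(\<integral>\<^sup>+p. g (snd p, fst p) \<partial>(lborel \<Otimes>\<^sub>M lborel)) = (\<integral>\<^sup>+p. g p \<partial>(lborel \<Otimes>\<^sub>M lborel))"
    by (rule nn_integral_pair_swap)
  have "(\<integral>\<^sup>+p. K \<xi> (fst p) (snd p) * G1 (fst p) * G2 (\<xi> - fst p - snd p) * G3 (snd p) \<partial>(lborel \<Otimes>\<^sub>M lborel))
    \<le> (\<integral>\<^sup>+p. (k (\<xi>, fst p, snd p) + k (\<xi>, snd p, fst p)) * G1 (fst p) * G2 (\<xi> - fst p - snd p) * G3 (snd p)
        \<partial>(lborel \<Otimes>\<^sub>M lborel))"
    by (intro nn_integral_mono mult_right_mono split) simp_all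
  also have "\<dots> = (\<integral>\<^sup>+p. k (\<xi>, fst p, snd p) * G1 (fst p) * G2 (\<xi> - fst p - snd p) * G3 (snd p) \<partial>(lborel \<Otimes>\<^sub>M lborel))
      + (\<integral>\<^sup>+p. g (snd p, fst p) \<partial>(lborel \<Otimes>\<^sub>M lborel))"
    unfolding g_def
    by (subst nn_integral_add[symmetric]) (measurable, simp add: distrib_left distrib_right mult_ac diff_diff_eq add.commute)
  finally show ?thesis
    unfolding swap unfolding g_def .
qed

text \<open>The reflected part of the kernel is the trilinear form of \<open>k\<close> with \<open>G1\<close> and \<open>G3\<close>
  exchanged, so Schur's test applies to it as well.\<close>

lemma trilinear_Schur_test_symmetrized:
  fixes K :: "real \<Rightarrow> real \<Rightarrow> real \<Rightarrow> ennreal" and k :: "real \<times> real \<times> real \<Rightarrow> ennreal"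
    and G1 G2 G3 :: "real \<Rightarrow> ennreal"
  assumes [measurable]: "k \<in> borel_measurable borel"
      "G1 \<in> borel_measurable borel" "G2 \<in> borel_measurable borel" "G3 \<in> borel_measurable borel"
    and split: "\<And>\<xi> \<xi>1 \<xi>3. K \<xi> \<xi>1 \<xi>3 \<le> k (\<xi>, \<xi>1, \<xi>3) + k (\<xi>, \<xi>3, \<xi>1)"
    and fiber1: "\<And>\<xi> \<xi>3. (\<integral>\<^sup>+\<xi>1. k (\<xi>, \<xi>1, \<xi>3) \<partial>lborel) \<le> S"
    and fiber2: "\<And>\<xi>1 \<xi>2. (\<integral>\<^sup>+\<xi>. k (\<xi>, \<xi>1, \<xi> - \<xi>1 - \<xi>2) \<partial>lborel) \<le> S"
  shows "(\<integral>\<^sup>+\<xi>. (\<integral>\<^sup>+p. K \<xi> (fst p) (snd p) * G1 (fst p) * G2 (\<xi> - fst p - snd p) * G3 (snd p)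
      \<partial>(lborel \<Otimes>\<^sub>M lborel))\<^sup>2 \<partial>lborel)
    \<le> 4 * S\<^sup>2 * (\<integral>\<^sup>+x. (G1 x)\<^sup>2 \<partial>lborel) * (\<integral>\<^sup>+x. (G2 x)\<^sup>2 \<partial>lborel) * (\<integral>\<^sup>+x. (G3 x)\<^sup>2 \<partial>lborel)"
proof -
  define F where "F G G' \<xi> = (\<integral>\<^sup>+p. k (\<xi>, fst p, snd p) * G (fst p) * G2 (\<xi> - fst p - snd p) * G' (snd p)
      \<partial>(lborel \<Otimes>\<^sub>M lborel))" for G G' :: "real \<Rightarrow> ennreal" and \<xi>
  define N where "N G = (\<integral>\<^sup>+x. (G x)\<^sup>2 \<partial>lborel)" for G :: "real \<Rightarrow> ennreal"
  have [measurable]: "F G1 G3 \<in> borel_measurable lborel" "F G3 G1 \<in> borel_measurable lborel"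
    unfolding F_def by measurable
  have "(\<integral>\<^sup>+\<xi>. (\<integral>\<^sup>+p. K \<xi> (fst p) (snd p) * G1 (fst p) * G2 (\<xi> - fst p - snd p) * G3 (snd p)
      \<partial>(lborel \<Otimes>\<^sub>M lborel))\<^sup>2 \<partial>lborel) \<le> (\<integral>\<^sup>+\<xi>. 2 * (F G1 G3 \<xi>)\<^sup>2 + 2 * (F G3 G1 \<xi>)\<^sup>2 \<partial>lborel)"
    unfolding F_def using split
    by (intro nn_integral_mono order_trans[OF power_mono ennreal_add_power2_le]
        nn_integral_kernel_reflection_le) simp_all
  also have "\<dots> = 2 * (\<integral>\<^sup>+\<xi>. (F G1 G3 \<xi>)\<^sup>2 \<partial>lborel) + 2 * (\<integral>\<^sup>+\<xi>. (F G3 G1 \<xi>)\<^sup>2 \<partial>lborel)"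
    by (simp add: nn_integral_add nn_integral_cmult)
  also have "\<dots> \<le> 2 * (S\<^sup>2 * N G1 * N G2 * N G3) + 2 * (S\<^sup>2 * N G3 * N G2 * N G1)"
    unfolding F_def N_def by (intro add_mono mult_left_mono trilinear_Schur_test fiber1 fiber2) simp_all
  also have "\<dots> = 4 * S\<^sup>2 * N G1 * N G2 * N G3"
  proof -
    have "S\<^sup>2 * N G3 * N G2 * N G1 = S\<^sup>2 * N G1 * N G2 * N G3"
      by (simp add: mult_ac)
    moreover have "2 * (S\<^sup>2 * N G1 * N G2 * N G3) + 2 * (S\<^sup>2 * N G1 * N G2 * N G3)
        = (2 + 2) * (S\<^sup>2 * N G1 * N G2 * N G3)"
      by (rule distrib_right[symmetric])
    ultimately show ?thesis
      by (simp add: mult.assoc)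
  qed
  finally show ?thesis
    unfolding N_def .
qed

lemma Phi_resonance: "Phi \<xi> \<xi>1 (\<xi> - \<xi>1 - \<xi>3) \<xi>3 = 2 * (\<xi> - \<xi>1) * (\<xi> - \<xi>3)"
  unfolding Phi_def by (simp add: power2_eq_square algebra_simps)

definition weighted_abs :: "real \<Rightarrow> (real \<Rightarrow> complex) \<Rightarrow> real \<Rightarrow> ennreal" where
  "weighted_abs s f x = ennreal (japan x powr s * cmod (f x))"

lemma measurable_weighted_abs [measurable]:
  "f \<in> borel_measurable borel \<Longrightarrow> weighted_abs s f \<in> borel_measurable borel"
  unfolding weighted_abs_def by measurable

lemma powr_double_mult_power2: "x powr (2 * r) * c\<^sup>2 = (x powr r * c)\<^sup>2" for x r c :: real
proof -
  have "x powr (2 * r) = x powr r * x powr r"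
    by (simp only: mult_2 powr_add)
  then show ?thesis
    by (simp only: power_mult_distrib power2_eq_square mult_ac)
qed

lemma nn_integral_weighted_abs_power2:
  assumes "in_Hs_hat s f"
  shows "(\<integral>\<^sup>+x. (weighted_abs s f x)\<^sup>2 \<partial>lborel) = ennreal ((Hs_norm_hat s f)\<^sup>2)"
proof -
  have [measurable]: "f \<in> borel_measurable borel"
    and int: "integrable lborel (\<lambda>x. japan x powr (2 * s) * (cmod (f x))\<^sup>2)"
    using assms unfolding in_Hs_hat_def by simp_all
  have "(weighted_abs s f x)\<^sup>2 = ennreal (japan x powr (2 * s) * (cmod (f x))\<^sup>2)" for x
    unfolding weighted_abs_def powr_double_mult_power2 by (simp add: ennreal_power)
  then have "(\<integral>\<^sup>+x. (weighted_abs s f x)\<^sup>2 \<partial>lborel)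
      = ennreal (\<integral>x. japan x powr (2 * s) * (cmod (f x))\<^sup>2 \<partial>lborel)"
    using nn_integral_eq_integral[OF int] by simp
  also have "(\<integral>x. japan x powr (2 * s) * (cmod (f x))\<^sup>2 \<partial>lborel) = (Hs_norm_hat s f)\<^sup>2"
    unfolding Hs_norm_hat_def by (simp add: integral_nonneg_AE)
  finally show ?thesis .
qed

lemma norm_T_integrand_weighted:
  "ennreal (japan \<xi> powr (s + \<epsilon>)) * ennreal (norm (T_integrand \<sigma> f1 f2 f3 \<xi> p))
   = ennreal (T_kernel s \<epsilon> \<sigma> \<xi> (fst p) (snd p))
     * weighted_abs s f1 (fst p) * weighted_abs s f2 (\<xi> - fst p - snd p) * weighted_abs s f3 (snd p)"
proof -
  obtain \<xi>1 \<xi>3 where p: "p = (\<xi>1, \<xi>3)"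
    by fastforce
  define \<xi>2 where "\<xi>2 = \<xi> - \<xi>1 - \<xi>3"
  define P where "P = japan (2 * (\<xi> - \<xi>1) * (\<xi> - \<xi>3)) powr (- \<sigma>)"
  define D where "D = japan \<xi>1 powr s * japan \<xi>2 powr s * japan \<xi>3 powr s"
  have "T_integrand \<sigma> f1 f2 f3 \<xi> p = complex_of_real (P * \<xi>2) * f1 \<xi>1 * f2 \<xi>2 * f3 \<xi>3"
    unfolding T_integrand_def p P_def \<xi>2_def Let_def by (simp only: fst_conv snd_conv Phi_resonance)
  then have "norm (T_integrand \<sigma> f1 f2 f3 \<xi> p) = P * \<bar>\<xi>2\<bar> * cmod (f1 \<xi>1) * cmod (f2 \<xi>2) * cmod (f3 \<xi>3)"
    by (simp add: norm_mult abs_mult P_def)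
  moreover have "T_kernel s \<epsilon> \<sigma> \<xi> \<xi>1 \<xi>3 = japan \<xi> powr (s + \<epsilon>) * \<bar>\<xi>2\<bar> * P / D"
    unfolding T_kernel_def P_def D_def \<xi>2_def ..
  moreover have "D \<noteq> 0"
    unfolding D_def by simp
  ultimately have "japan \<xi> powr (s + \<epsilon>) * norm (T_integrand \<sigma> f1 f2 f3 \<xi> p)
      = T_kernel s \<epsilon> \<sigma> \<xi> \<xi>1 \<xi>3 * (japan \<xi>1 powr s * cmod (f1 \<xi>1))
        * (japan \<xi>2 powr s * cmod (f2 \<xi>2)) * (japan \<xi>3 powr s * cmod (f3 \<xi>3))"
    by (simp add: D_def field_simps)
  then show ?thesis
    unfolding weighted_abs_def p \<xi>2_def
    by (simp add: T_kernel_nonneg flip: ennreal_mult)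
qed

lemma measurable_T_integrand [measurable]:
  assumes [measurable]: "f1 \<in> borel_measurable borel" "f2 \<in> borel_measurable borel" "f3 \<in> borel_measurable borel"
  shows "(\<lambda>x. T_integrand \<sigma> f1 f2 f3 (fst x) (snd x)) \<in> borel_measurable (lborel \<Otimes>\<^sub>M (lborel \<Otimes>\<^sub>M lborel))"
  unfolding T_integrand_def Let_def Phi_def by measurable

lemma measurable_T_integrand_slice [measurable]:
  assumes [measurable]: "f1 \<in> borel_measurable borel" "f2 \<in> borel_measurable borel" "f3 \<in> borel_measurable borel"
  shows "T_integrand \<sigma> f1 f2 f3 \<xi> \<in> borel_measurable (lborel \<Otimes>\<^sub>M lborel)"
  unfolding T_integrand_def Let_def Phi_def by measurable

lemma ennreal_norm_integral_le_nn_integral: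
  "ennreal (norm (integral\<^sup>L M f)) \<le> (\<integral>\<^sup>+x. ennreal (norm (f x)) \<partial>M)"
  by (cases "integrable M f") (simp_all add: integral_norm_bound_ennreal not_integrable_integral_eq)

lemma AE_integrable_of_weighted_nn_integral_finite:
  fixes F :: "real \<Rightarrow> real \<times> real \<Rightarrow> complex"
  assumes finite: "(\<integral>\<^sup>+\<xi>. (ennreal (japan \<xi> powr r)
        * (\<integral>\<^sup>+p. ennreal (norm (F \<xi> p)) \<partial>(lborel \<Otimes>\<^sub>M lborel)))\<^sup>2 \<partial>lborel) < \<infinity>"
    and [measurable]: "(\<lambda>x. F (fst x) (snd x)) \<in> borel_measurable (lborel \<Otimes>\<^sub>M (lborel \<Otimes>\<^sub>M lborel))"
      "\<And>\<xi>. F \<xi> \<in> borel_measurable (lborel \<Otimes>\<^sub>M lborel)"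
  shows "AE \<xi> in lborel. integrable lborel (F \<xi>)"
proof -
  define I where "I \<xi> = (\<integral>\<^sup>+p. ennreal (norm (F \<xi> p)) \<partial>(lborel \<Otimes>\<^sub>M lborel))" for \<xi>
  have "AE \<xi> in lborel. (ennreal (japan \<xi> powr r) * I \<xi>)\<^sup>2 \<noteq> \<infinity>"
    using finite unfolding I_def by (intro nn_integral_PInf_AE) simp_all
  then show ?thesis
  proof eventually_elim
    case (elim \<xi>)
    have "I \<xi> \<noteq> \<infinity>"
    proof
      assume "I \<xi> = \<infinity>"
      moreover have "0 < japan \<xi> powr r"
        using japan_pos[of \<xi>] by simp
      ultimately show False
        using elim by (simp add: ennreal_mult_top)
    qed
    then have "integrable (lborel \<Otimes>\<^sub>M lborel) (F \<xi>)"
      unfolding I_def by (intro integrableI_bounded) (simp_all add: top.not_eq_extremum)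
    then show ?case
      by (simp only: lborel_prod)
  qed
qed

lemma Hs_bound_of_parametric_integral:
  fixes F :: "real \<Rightarrow> real \<times> real \<Rightarrow> complex" and r M :: real
  assumes [measurable]: "(\<lambda>x. F (fst x) (snd x)) \<in> borel_measurable (lborel \<Otimes>\<^sub>M (lborel \<Otimes>\<^sub>M lborel))"
      "\<And>\<xi>. F \<xi> \<in> borel_measurable (lborel \<Otimes>\<^sub>M lborel)"
    and "0 \<le> M"
    and bound: "(\<integral>\<^sup>+\<xi>. (ennreal (japan \<xi> powr r)
        * (\<integral>\<^sup>+p. ennreal (norm (F \<xi> p)) \<partial>(lborel \<Otimes>\<^sub>M lborel)))\<^sup>2 \<partial>lborel) \<le> ennreal (M\<^sup>2)"
  shows "(AE \<xi> in lborel. integrable lborel (F \<xi>))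
    \<and> in_Hs_hat r (\<lambda>\<xi>. \<integral>p. F \<xi> p \<partial>lborel) \<and> Hs_norm_hat r (\<lambda>\<xi>. \<integral>p. F \<xi> p \<partial>lborel) \<le> M"
proof -
  define I where "I \<xi> = (\<integral>\<^sup>+p. ennreal (norm (F \<xi> p)) \<partial>(lborel \<Otimes>\<^sub>M lborel))" for \<xi>
  define G where "G \<xi> = (\<integral>p. F \<xi> p \<partial>(lborel \<Otimes>\<^sub>M lborel))" for \<xi>
  define W where "W \<xi> = japan \<xi> powr (2 * r) * (cmod (G \<xi>))\<^sup>2" for \<xi>
  have G_eq: "(\<lambda>\<xi>. \<integral>p. F \<xi> p \<partial>lborel) = G"
    unfolding G_def lborel_prod ..
  have [measurable]: "G \<in> borel_measurable lborel"
    unfolding G_def by measurable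
  have bound_finite: "(\<integral>\<^sup>+\<xi>. (ennreal (japan \<xi> powr r) * I \<xi>)\<^sup>2 \<partial>lborel) < \<infinity>"
    using bound unfolding I_def by (simp add: le_less_trans)
  have pointwise: "ennreal (W \<xi>) \<le> (ennreal (japan \<xi> powr r) * I \<xi>)\<^sup>2" for \<xi>
  proof -
    have "ennreal (W \<xi>) = (ennreal (japan \<xi> powr r) * ennreal (cmod (G \<xi>)))\<^sup>2"
      unfolding W_def powr_double_mult_power2 by (simp add: ennreal_power flip: ennreal_mult)
    also have "\<dots> \<le> (ennreal (japan \<xi> powr r) * I \<xi>)\<^sup>2"
      unfolding G_def I_def by (intro power_mono mult_left_mono ennreal_norm_integral_le_nn_integral) simp_all
    finally show ?thesis .
  qed
  have W_le: "(\<integral>\<^sup>+\<xi>. ennreal (W \<xi>) \<partial>lborel) \<le> ennreal (M\<^sup>2)"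
    using nn_integral_mono[OF pointwise] bound unfolding I_def by (rule order_trans)
  then have W_int: "integrable lborel W"
    using bound_finite unfolding W_def by (intro integrableI_bounded) (simp_all add: le_less_trans)
  then have "(\<integral>\<^sup>+\<xi>. ennreal (W \<xi>) \<partial>lborel) = ennreal (\<integral>\<xi>. W \<xi> \<partial>lborel)"
    by (rule nn_integral_eq_integral) (simp add: W_def)
  then have "(\<integral>\<xi>. W \<xi> \<partial>lborel) \<le> M\<^sup>2"
    using W_le by simp
  then have "Hs_norm_hat r G \<le> M"
    unfolding Hs_norm_hat_def W_def using \<open>0 \<le> M\<close> by (intro real_le_lsqrt) simp_all
  moreover have "in_Hs_hat r G"
    unfolding in_Hs_hat_def using W_int unfolding W_def by simp
  moreover have "AE \<xi> in lborel. integrable lborel (F \<xi>)"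
    using bound_finite assms(1,2) unfolding I_def by (rule AE_integrable_of_weighted_nn_integral_finite)
  ultimately show ?thesis
    unfolding G_eq by blast
qed

definition T_kernel_cut :: "real \<Rightarrow> real \<Rightarrow> real \<Rightarrow> real \<times> real \<times> real \<Rightarrow> ennreal" where
  "T_kernel_cut s \<epsilon> \<sigma> x = ennreal (if \<bar>fst x - fst (snd x)\<bar> \<le> \<bar>fst x - snd (snd x)\<bar>
     then T_kernel s \<epsilon> \<sigma> (fst x) (fst (snd x)) (snd (snd x)) else 0)"

lemma measurable_T_kernel_cut [measurable]: "T_kernel_cut s \<epsilon> \<sigma> \<in> borel_measurable borel"
proof -
  have "T_kernel_cut s \<epsilon> \<sigma> \<in> borel_measurable (borel \<Otimes>\<^sub>M (borel \<Otimes>\<^sub>M borel))"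
    unfolding T_kernel_cut_def by measurable
  then show ?thesis
    by (simp only: borel_prod)
qed

lemma T_kernel_le_cut_sum:
  "ennreal (T_kernel s \<epsilon> \<sigma> \<xi> \<xi>1 \<xi>3) \<le> T_kernel_cut s \<epsilon> \<sigma> (\<xi>, \<xi>1, \<xi>3) + T_kernel_cut s \<epsilon> \<sigma> (\<xi>, \<xi>3, \<xi>1)"
  unfolding T_kernel_cut_def using T_kernel_swap[of s \<epsilon> \<sigma> \<xi> \<xi>3 \<xi>1]
  by (cases "\<bar>\<xi> - \<xi>1\<bar> \<le> \<bar>\<xi> - \<xi>3\<bar>") auto

locale smoothing_exponents =
  fixes s \<epsilon> \<sigma> q :: real
  assumes eps_nonneg: "0 \<le> \<epsilon>" and eps_lt: "1 + \<epsilon> < 2 * min s 1"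
    and q_le: "q \<le> min s 1" and q_lt: "q < 1" and sigma_lt: "\<sigma> < 1"
    and exponent_balance: "2 + \<epsilon> - 2 * \<sigma> - q \<le> 0"
begin

lemma eps_le_one: "\<epsilon> \<le> 1"
  using eps_lt min.cobounded2[of s 1] by linarith

lemma q_nonneg: "0 \<le> q"
  using exponent_balance sigma_lt eps_nonneg by linarith

lemma sigma_ge: "1/2 \<le> \<sigma>"
  using exponent_balance q_lt eps_nonneg by linarith

definition "majorant_bound = 10 + 18 / (1 - \<sigma>) + 16 / (1 - q)"

definition "fiber_bound = 5 powr (3 * s + 3) * majorant_bound"

lemma fiber_bound_pos: "0 < fiber_bound"
  unfolding fiber_bound_def majorant_bound_def using sigma_lt q_lt by (simp add: add_pos_nonneg)

definition "majorant_cut a b = ennreal (kernel_majorant \<epsilon> \<sigma> q a b * (if \<bar>a\<bar> \<le> \<bar>b\<bar> then 1 else 0))"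

lemma measurable_majorant_cut [measurable]:
  assumes [measurable]: "f \<in> borel_measurable M" "g \<in> borel_measurable M"
  shows "(\<lambda>x. majorant_cut (f x) (g x)) \<in> borel_measurable M"
  unfolding majorant_cut_def by measurable

lemma T_kernel_cut_le_majorant_cut:
  "T_kernel_cut s \<epsilon> \<sigma> (\<xi>, \<xi>1, \<xi>3) \<le> ennreal (5 powr (3 * s + 3)) * majorant_cut (\<xi> - \<xi>1) (\<xi> - \<xi>3)"
  using T_kernel_le_majorant[OF eps_nonneg eps_lt q_nonneg q_le, of \<xi> \<xi>1 \<xi>3 \<sigma>]
  unfolding T_kernel_cut_def majorant_cut_def
  by (simp add: ennreal_leI kernel_majorant_nonneg flip: ennreal_mult)

lemma nn_integral_majorant_cut_le: "(\<integral>\<^sup>+a. majorant_cut a b \<partial>lborel) \<le> ennreal majorant_bound"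
  unfolding majorant_cut_def majorant_bound_def
  using eps_nonneg eps_le_one q_nonneg q_lt sigma_ge sigma_lt exponent_balance
  by (rule nn_integral_kernel_majorant_le)

lemma nn_integral_T_kernel_cut_le:
  "(\<integral>\<^sup>+\<xi>1. T_kernel_cut s \<epsilon> \<sigma> (\<xi>, \<xi>1, \<xi>3) \<partial>lborel) \<le> ennreal fiber_bound"
  "(\<integral>\<^sup>+\<xi>. T_kernel_cut s \<epsilon> \<sigma> (\<xi>, \<xi>1, \<xi> - \<xi>1 - \<xi>2) \<partial>lborel) \<le> ennreal fiber_bound"
proof -
  have "(\<integral>\<^sup>+\<xi>1. T_kernel_cut s \<epsilon> \<sigma> (\<xi>, \<xi>1, \<xi>3) \<partial>lborel)
      \<le> (\<integral>\<^sup>+\<xi>1. ennreal (5 powr (3 * s + 3)) * majorant_cut (\<xi> - \<xi>1) (\<xi> - \<xi>3) \<partial>lborel)"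
    by (intro nn_integral_mono T_kernel_cut_le_majorant_cut)
  also have "\<dots> = ennreal (5 powr (3 * s + 3)) * (\<integral>\<^sup>+\<xi>1. majorant_cut (\<xi> - \<xi>1) (\<xi> - \<xi>3) \<partial>lborel)"
    by (rule nn_integral_cmult) measurable
  also have "(\<integral>\<^sup>+\<xi>1. majorant_cut (\<xi> - \<xi>1) (\<xi> - \<xi>3) \<partial>lborel) = (\<integral>\<^sup>+a. majorant_cut a (\<xi> - \<xi>3) \<partial>lborel)"
    using nn_integral_real_affine[of "\<lambda>a. majorant_cut a (\<xi> - \<xi>3)" "- 1" \<xi>] by simp
  also have "ennreal (5 powr (3 * s + 3)) * \<dots> \<le> ennreal (5 powr (3 * s + 3)) * ennreal majorant_bound"
    by (intro mult_left_mono nn_integral_majorant_cut_le) simp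
  finally show "(\<integral>\<^sup>+\<xi>1. T_kernel_cut s \<epsilon> \<sigma> (\<xi>, \<xi>1, \<xi>3) \<partial>lborel) \<le> ennreal fiber_bound"
    unfolding fiber_bound_def by (simp add: ennreal_mult')
  have "(\<integral>\<^sup>+\<xi>. T_kernel_cut s \<epsilon> \<sigma> (\<xi>, \<xi>1, \<xi> - \<xi>1 - \<xi>2) \<partial>lborel)
      \<le> (\<integral>\<^sup>+\<xi>. ennreal (5 powr (3 * s + 3)) * majorant_cut (\<xi> - \<xi>1) (\<xi>1 + \<xi>2) \<partial>lborel)"
    by (intro nn_integral_mono order_trans[OF T_kernel_cut_le_majorant_cut]) simp
  also have "\<dots> = ennreal (5 powr (3 * s + 3)) * (\<integral>\<^sup>+\<xi>. majorant_cut (\<xi> - \<xi>1) (\<xi>1 + \<xi>2) \<partial>lborel)"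
    by (rule nn_integral_cmult) measurable
  also have "(\<integral>\<^sup>+\<xi>. majorant_cut (\<xi> - \<xi>1) (\<xi>1 + \<xi>2) \<partial>lborel) = (\<integral>\<^sup>+a. majorant_cut a (\<xi>1 + \<xi>2) \<partial>lborel)"
    using nn_integral_real_affine[of "\<lambda>a. majorant_cut a (\<xi>1 + \<xi>2)" 1 "- \<xi>1"] by simp
  also have "ennreal (5 powr (3 * s + 3)) * \<dots> \<le> ennreal (5 powr (3 * s + 3)) * ennreal majorant_bound"
    by (intro mult_left_mono nn_integral_majorant_cut_le) simp
  finally show "(\<integral>\<^sup>+\<xi>. T_kernel_cut s \<epsilon> \<sigma> (\<xi>, \<xi>1, \<xi> - \<xi>1 - \<xi>2) \<partial>lborel) \<le> ennreal fiber_bound"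
    unfolding fiber_bound_def by (simp add: ennreal_mult')
qed

lemma weighted_T_integrand_L2_bound:
  assumes "in_Hs_hat s f1" "in_Hs_hat s f2" "in_Hs_hat s f3"
  shows "(\<integral>\<^sup>+\<xi>. (ennreal (japan \<xi> powr (s + \<epsilon>))
      * (\<integral>\<^sup>+p. ennreal (norm (T_integrand \<sigma> f1 f2 f3 \<xi> p)) \<partial>(lborel \<Otimes>\<^sub>M lborel)))\<^sup>2 \<partial>lborel)
    \<le> ennreal ((2 * fiber_bound * Hs_norm_hat s f1 * Hs_norm_hat s f2 * Hs_norm_hat s f3)\<^sup>2)"
proof -
  have [measurable]: "f1 \<in> borel_measurable borel" "f2 \<in> borel_measurable borel" "f3 \<in> borel_measurable borel"
    using assms unfolding in_Hs_hat_def by simp_all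
  have "(\<integral>\<^sup>+\<xi>. (ennreal (japan \<xi> powr (s + \<epsilon>))
      * (\<integral>\<^sup>+p. ennreal (norm (T_integrand \<sigma> f1 f2 f3 \<xi> p)) \<partial>(lborel \<Otimes>\<^sub>M lborel)))\<^sup>2 \<partial>lborel)
    = (\<integral>\<^sup>+\<xi>. (\<integral>\<^sup>+p. ennreal (T_kernel s \<epsilon> \<sigma> \<xi> (fst p) (snd p)) * weighted_abs s f1 (fst p)
        * weighted_abs s f2 (\<xi> - fst p - snd p) * weighted_abs s f3 (snd p) \<partial>(lborel \<Otimes>\<^sub>M lborel))\<^sup>2 \<partial>lborel)"
  proof (intro nn_integral_cong arg_cong[where f = "\<lambda>x. x\<^sup>2"])
    fix \<xi>
    have "ennreal (japan \<xi> powr (s + \<epsilon>)) * (\<integral>\<^sup>+p. ennreal (norm (T_integrand \<sigma> f1 f2 f3 \<xi> p)) \<partial>(lborel \<Otimes>\<^sub>M lborel))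
        = (\<integral>\<^sup>+p. ennreal (japan \<xi> powr (s + \<epsilon>)) * ennreal (norm (T_integrand \<sigma> f1 f2 f3 \<xi> p)) \<partial>(lborel \<Otimes>\<^sub>M lborel))"
      by (rule nn_integral_cmult[symmetric]) measurable
    then show "ennreal (japan \<xi> powr (s + \<epsilon>)) * (\<integral>\<^sup>+p. ennreal (norm (T_integrand \<sigma> f1 f2 f3 \<xi> p)) \<partial>(lborel \<Otimes>\<^sub>M lborel))
        = (\<integral>\<^sup>+p. ennreal (T_kernel s \<epsilon> \<sigma> \<xi> (fst p) (snd p)) * weighted_abs s f1 (fst p)
          * weighted_abs s f2 (\<xi> - fst p - snd p) * weighted_abs s f3 (snd p) \<partial>(lborel \<Otimes>\<^sub>M lborel))"
      by (simp only: norm_T_integrand_weighted)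
  qed
  also have "\<dots> \<le> 4 * (ennreal fiber_bound)\<^sup>2 * (\<integral>\<^sup>+x. (weighted_abs s f1 x)\<^sup>2 \<partial>lborel)
      * (\<integral>\<^sup>+x. (weighted_abs s f2 x)\<^sup>2 \<partial>lborel) * (\<integral>\<^sup>+x. (weighted_abs s f3 x)\<^sup>2 \<partial>lborel)"
    by (rule trilinear_Schur_test_symmetrized[where k = "T_kernel_cut s \<epsilon> \<sigma>"])
      (simp_all add: T_kernel_le_cut_sum nn_integral_T_kernel_cut_le)
  also have "\<dots> = ennreal ((2 * fiber_bound * Hs_norm_hat s f1 * Hs_norm_hat s f2 * Hs_norm_hat s f3)\<^sup>2)"
    using assms fiber_bound_pos
    by (simp add: nn_integral_weighted_abs_power2 power_mult_distrib ennreal_power ennreal_mult'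
        flip: ennreal_mult)
  finally show ?thesis .
qed

lemma T_hat_Hs_bound:
  assumes "in_Hs_hat s f1" "in_Hs_hat s f2" "in_Hs_hat s f3"
  shows "(AE \<xi> in lborel. integrable lborel (T_integrand \<sigma> f1 f2 f3 \<xi>))
    \<and> in_Hs_hat (s + \<epsilon>) (T_hat \<sigma> f1 f2 f3)
    \<and> Hs_norm_hat (s + \<epsilon>) (T_hat \<sigma> f1 f2 f3)
        \<le> 2 * fiber_bound * Hs_norm_hat s f1 * Hs_norm_hat s f2 * Hs_norm_hat s f3"
proof -
  have [measurable]: "f1 \<in> borel_measurable borel" "f2 \<in> borel_measurable borel" "f3 \<in> borel_measurable borel"
    using assms unfolding in_Hs_hat_def by simp_all
  have "0 \<le> 2 * fiber_bound * Hs_norm_hat s f1 * Hs_norm_hat s f2 * Hs_norm_hat s f3"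
    using fiber_bound_pos by (simp add: Hs_norm_hat_def)
  then show ?thesis
    unfolding T_hat_def[abs_def]
    by (intro Hs_bound_of_parametric_integral weighted_T_integrand_L2_bound assms) measurable
qed

end

theorem lemma12:
  fixes s \<epsilon> :: real
  assumes "s > 1/2" and "0 < \<epsilon>" and "\<epsilon> < min 1 (2 * s - 1)"
  shows "\<exists>\<sigma> C. 0 < \<sigma> \<and> \<sigma> < 1 \<and> C > 0 \<and>
    (\<forall>f1 f2 f3. in_Hs_hat s f1 \<and> in_Hs_hat s f2 \<and> in_Hs_hat s f3 \<longrightarrow>
       (AE \<xi> in lborel. integrable lborel (T_integrand \<sigma> f1 f2 f3 \<xi>)) \<and>
       in_Hs_hat (s + \<epsilon>) (T_hat \<sigma> f1 f2 f3) \<and>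
       Hs_norm_hat (s + \<epsilon>) (T_hat \<sigma> f1 f2 f3)
         \<le> C * Hs_norm_hat s f1 * Hs_norm_hat s f2 * Hs_norm_hat s f3)"
proof -
  define m where "m = min s 1"
  define q where "q = (\<epsilon> + m) / 2"
  define \<sigma> where "\<sigma> = 1 - (q - \<epsilon>) / 4"
  \<comment> \<open>Since \<open>\<epsilon> < q\<close>, this gives \<open>2 + \<epsilon> - 2\<sigma> - q = (\<epsilon> - q)/2 < 0\<close>.\<close>
  have "\<epsilon> < 1" "\<epsilon> < 2 * s - 1"
    using assms(3) by simp_all
  then have m: "\<epsilon> < m" "1 + \<epsilon> < 2 * m" "m \<le> 1"
    unfolding m_def by (simp_all add: min_def)
  have q: "\<epsilon> < q" "q < m"
    using m by (simp_all add: q_def)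
  interpret smoothing_exponents s \<epsilon> \<sigma> q
  proof
    show "0 \<le> \<epsilon>" "1 + \<epsilon> < 2 * min s 1" "q \<le> min s 1" "q < 1"
      using assms(2) m q unfolding m_def by simp_all
    show "\<sigma> < 1" "2 + \<epsilon> - 2 * \<sigma> - q \<le> 0"
      using q by (simp_all add: \<sigma>_def field_simps)
  qed
  have "0 < \<sigma>" "\<sigma> < 1"
    using sigma_ge sigma_lt by simp_all
  with fiber_bound_pos T_hat_Hs_bound show ?thesis
    by (intro exI[of _ \<sigma>] exI[of _ "2 * fiber_bound"]) auto
qed

end
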